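(* In the setting described in the context, suppose $T$ is irreducible, $A$ is irreducible, $\rho<1$, $r_A>1$, and there is a finite $\theta$ with $1<\theta<r_A$ and $\theta=\delta(A^*(\theta))$. Then for complex $\omega$ with $|\omega|=1$, $\delta(\Gamma_A^*(\theta\omega))=1$ if and only if $\omega^\tau=1$. Thus $\tau=\max\{n\in\{1,\dots,M\}:\delta(\Gamma_A^*(\theta\omega_n))=1\}$. Further, if $\delta(\Gamma_A^*(\theta\omega))=1$, this eigenvalue is simple.
   Context: Let $M_0,M$ be positive integers. Consider a discrete-time Markov chain of M/G/1 type with state space $\{(0,j):1\le j\le M_0\}\cup\{(k,j):k\ge1,1\le j\le M\}$ and transition matrix in lexicographic order \[ T=\begin{pmatrix}B(0)&B(1)&B(2)&\cdots\\ C(0)&A(1)&A(2)&\cdots\\ O&A(0)&A(1)&\cdots\\ O&O&A(0)&\cdots\\ \vdots&\vdots&\vdots&\ddots\end{pmatrix}, \] with nonnegative blocks $A(k)$ ($M\times M$), $B(0)$, $B(k)$, $C(0)$ of compatible sizes, $A=\sum_{k\ge0}A(k)$ stochastic, $B(0)e+\sum_{k\ge1}B(k)e=e$; $\pi A=\pi$, $\pi e=1$, $\rho=\pi\sum_{k\ge1}kA(k)e$. $A^*(z)=\sum_{k\ge0}z^kA(k)$ has convergence radius $r_A$; $\Gamma_A^*(z)=z^{-1}A^*(z)$. For a square complex matrix $X$, $\delta(X)$ is a maximum-modulus eigenvalue with nonnegative argument and maximal real part among maximum-modulus eigenvalues. Period $\tau$: in the Markov additive process on $\mathbb Z\times\{1,\dots,M\}$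 moving from $(k_0,i)$ to $(k_0+k,j)$ with probability $[\Gamma_A(k)]_{i,j}$, where $\Gamma_A(k)=A(k+1)$ ($k\ge-1$), $O$ ($k\le-2$), $\tau$ is the common value of $\gcd\{k\ne0:(0,j)\to(k,j)\}$ ($\to$ = reachable with positive probability in $\ge1$ steps). $\omega_n=\exp(2\pi\iota/n)$. *)

theory Defs
  imports "HOL-Analysis.Analysis" "Jordan_Normal_Form.Spectral_Radius"
begin

text \<open>States are pairs (level, phase), 0-based phases: level 0 has phases 0..M0-1,
 levels k >= 1 have phases 0..M-1.\<close>

definition mg1_states :: "nat \<Rightarrow> nat \<Rightarrow> (nat \<times> nat) set" where
  "mg1_states M0 M = {(k, j). (k = 0 \<and> j < M0) \<or> (k \<ge> 1 \<and> j < M)}"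

definition mg1_T :: "(nat \<Rightarrow> real mat) \<Rightarrow> (nat \<Rightarrow> real mat) \<Rightarrow> real mat \<Rightarrow>
    (nat \<times> nat) \<Rightarrow> (nat \<times> nat) \<Rightarrow> real" where
  "mg1_T A B C0 s t = (case s of (k, i) \<Rightarrow> case t of (l, j) \<Rightarrow>
     if k = 0 then B l $$ (i, j)
     else if l = 0 then (if k = 1 then C0 $$ (i, j) else 0)
     else if k \<le> l + 1 then A (l + 1 - k) $$ (i, j) else 0)"

definition irreducible_on :: "'s set \<Rightarrow> ('s \<Rightarrow> 's \<Rightarrow> real) \<Rightarrow> bool" where
  "irreducible_on S P = (\<forall>s\<in>S. \<forall>t\<in>S. (s, t) \<in> {(u, v). u \<in> S \<and> v \<in> S \<and> P u v > 0}\<^sup>*)"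

definition Asum :: "(nat \<Rightarrow> real mat) \<Rightarrow> nat \<Rightarrow> nat \<Rightarrow> real" where
  "Asum A i j = (\<Sum>k. A k $$ (i, j))"

definition Astar :: "nat \<Rightarrow> (nat \<Rightarrow> real mat) \<Rightarrow> complex \<Rightarrow> complex mat" where
  "Astar M A z = mat M M (\<lambda>(i, j). \<Sum>k. z ^ k * complex_of_real (A k $$ (i, j)))"

definition GammaStar :: "nat \<Rightarrow> (nat \<Rightarrow> real mat) \<Rightarrow> complex \<Rightarrow> complex mat" where
  "GammaStar M A z = (inverse z) \<cdot>\<^sub>m Astar M A z"

definition rA :: "nat \<Rightarrow> (nat \<Rightarrow> real mat) \<Rightarrow> ereal" where
  "rA M A = (INF ij \<in> {..<M} \<times> {..<M}. conv_radius (\<lambda>k. A k $$ ij))"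

text \<open>delta(X): among eigenvalues of maximal modulus, the one with maximal real part,
 and among those (a conjugate-position pair) the one with nonnegative argument,
 i.e. larger imaginary part.\<close>
definition delta :: "complex mat \<Rightarrow> complex" where
  "delta X = (THE l. eigenvalue X l \<and>
      (\<forall>m. eigenvalue X m \<longrightarrow>
         cmod m \<le> cmod l \<and>
         (cmod m = cmod l \<longrightarrow> Re m < Re l \<or> (Re m = Re l \<and> Im m \<le> Im l))))"

text \<open>Markov additive process on Z x {phases}: from (k0,i) to (k0+k,j) with
 probability [Gamma_A(k)]_{ij} = A(k+1)_{ij} for k >= -1.\<close>
definition map_step :: "nat \<Rightarrow> (nat \<Rightarrow> real mat) \<Rightarrow> ((int \<times> nat) \<times> (int \<times> nat)) set" where
  "map_step M A = {((k0, i), (k1, j)). i < M \<and> j < M \<and> k1 - k0 \<ge> -1 \<and>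
                      A (nat (k1 - k0 + 1)) $$ (i, j) > 0}"

definition period_at :: "nat \<Rightarrow> (nat \<Rightarrow> real mat) \<Rightarrow> nat \<Rightarrow> nat" where
  "period_at M A j = nat (Gcd {k :: int. k \<noteq> 0 \<and> ((0, j), (k, j)) \<in> (map_step M A)\<^sup>+})"

text \<open>tau: the common value of period_at over phases; we take phase 0.\<close>
definition tau :: "nat \<Rightarrow> (nat \<Rightarrow> real mat) \<Rightarrow> nat" where
  "tau M A = period_at M A 0"

definition omega :: "nat \<Rightarrow> complex" where
  "omega n = cis (2 * pi / real n)"

end

theory Submission
  imports Defs "Jordan_Normal_Form.Jordan_Normal_Form_Uniqueness"
begin

hide_const (open) Coset.order

text \<open>
  Let \<open>P = \<Gamma>\<^sub>A\<^sup>*(\<theta>)\<close>: an irreducible nonnegative matrix whose spectral radius is \<open>1\<close> by the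
  choice of \<open>\<theta>\<close>. For \<open>|w| = 1\<close> the entries of \<open>\<Gamma>\<^sub>A\<^sup>*(\<theta>w)\<close> are dominated in modulus by
  those of \<open>P\<close>, so all its eigenvalues lie in the closed unit disc and \<open>\<delta>(\<Gamma>\<^sub>A\<^sup>*(\<theta>w)) = 1\<close>
  iff \<open>1\<close> is an eigenvalue. If \<open>\<Gamma>\<^sub>A\<^sup>*(\<theta>w) v = v\<close>, equality in the triangle inequality forces
  \<open>v\<^sub>j = y\<^sub>j u\<^sub>j\<close> with \<open>y\<close> the Perron vector of \<open>P\<close> and unimodular phases with
  \<open>u\<^sub>i = w^(k-1) u\<^sub>j\<close> whenever \<open>A(k)\<^sub>i\<^sub>j > 0\<close>; going around a loop of the additive process
  gives \<open>w\<^sup>s = 1\<close> for every loop length \<open>s\<close>, hence \<open>w\<^sup>\<tau> = 1\<close>. Conversely, if \<open>w\<^sup>\<tau> = 1\<close>,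
  then \<open>\<Gamma>\<^sub>A\<^sup>*(\<theta>w) = D\<inverse> P D\<close> for a diagonal matrix \<open>D\<close> of powers of \<open>w\<close>, so \<open>1\<close> is a
  simple eigenvalue. Finally \<open>1 \<le> \<tau> \<le> M\<close>: otherwise one builds a phase potential \<open>g\<close> with
  \<open>g\<^sub>j - g\<^sub>i \<le> k - 1\<close> along every transition, which contradicts the negative drift \<open>\<rho> < 1\<close>.
\<close>

lemma polynomial_over_exponential_LIMSEQ_zero:
  assumes "1 < (l::real)"
  shows "(\<lambda>k. real k ^ d / l ^ k) \<longlonglongrightarrow> 0"
proof (cases "d = 0")
  case True
  have "(\<lambda>k. (inverse l) ^ k) \<longlonglongrightarrow> 0"
    using assms by (intro LIMSEQ_realpow_zero) (auto simp: inverse_less_1_iff)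
  thus ?thesis using True by (simp add: power_inverse divide_inverse)
next
  case False
  define m where "m = root d l"
  have m1: "m > 1" and md: "m ^ d = l" unfolding m_def using False assms by simp_all
  have "(\<lambda>k. real k * (inverse m) ^ k) \<longlonglongrightarrow> 0"
    using m1 by (intro powser_times_n_limit_0) (auto simp: inverse_less_1_iff)
  hence "(\<lambda>k. (real k * (inverse m) ^ k) ^ d) \<longlonglongrightarrow> 0"
    using tendsto_power[of _ 0 _ d] False by (simp add: power_0_left)
  moreover have "(real k * (inverse m) ^ k) ^ d = real k ^ d / l ^ k" for k
    unfolding md[symmetric]
    by (simp add: power_mult_distrib power_inverse divide_inverse power_mult[symmetric] mult.commute)
  ultimately show ?thesis by simp
qed

lemma eigenvalue_smult_iff:
  assumes c: "(c::complex) \<noteq> 0" and X: "X \<in> carrier_mat n n"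
  shows "eigenvalue (c \<cdot>\<^sub>m X) l \<longleftrightarrow> eigenvalue X (l / c)"
proof -
  have "(c \<cdot>\<^sub>m X) *\<^sub>v v = l \<cdot>\<^sub>v v \<longleftrightarrow> X *\<^sub>v v = (l / c) \<cdot>\<^sub>v v" if v: "v \<in> carrier_vec n" for v
  proof -
    have "(c \<cdot>\<^sub>m X) *\<^sub>v v = c \<cdot>\<^sub>v (X *\<^sub>v v)"
      using X v by (intro eq_vecI) (auto simp: scalar_prod_def sum_distrib_left mult.assoc)
    also have "\<dots> = l \<cdot>\<^sub>v v \<longleftrightarrow> X *\<^sub>v v = (l / c) \<cdot>\<^sub>v v"
      using X v c by (auto simp: vec_eq_iff field_simps)
    finally show ?thesis .
  qed
  thus ?thesis using X unfolding eigenvalue_def eigenvector_def by auto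
qed

lemma power_int_Gcd_eq_1:
  fixes S :: "int set" and w :: complex
  assumes w0: "w \<noteq> 0" and S: "\<And>s. s \<in> S \<Longrightarrow> w powi s = 1"
  shows "w powi (Gcd S) = 1"
proof (cases "S \<subseteq> {0}")
  case True
  hence "Gcd S = 0" by simp
  thus ?thesis by (metis power_int_0_right)
next
  case False
  then obtain s0 where s0: "s0 \<in> S" "s0 \<noteq> 0" by auto
  have "w ^ nat \<bar>s0\<bar> = 1"
    using S[OF s0(1)] w0 by (cases "s0 \<ge> 0") (auto simp: power_int_minus power_int_def power_inverse)
  hence ex: "\<exists>d::nat. d > 0 \<and> w ^ d = 1" using s0(2) by (intro exI[of _ "nat \<bar>s0\<bar>"]) auto
  define m where "m = (LEAST d::nat. d > 0 \<and> w ^ d = 1)"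
  have m: "m > 0" "w ^ m = 1" using LeastI_ex[OF ex] unfolding m_def by auto
  have "int m dvd s" if s: "s \<in> S" for s
  proof -
    have r: "0 \<le> s mod int m" "s mod int m < int m" using m by auto
    have "s = int m * (s div int m) + s mod int m" by simp
    hence "w powi s = (w powi int m) powi (s div int m) * w powi (s mod int m)"
      using w0 by (metis power_int_add power_int_mult)
    hence "w powi (s mod int m) = 1" using S[OF s] m by simp
    hence "w ^ nat (s mod int m) = 1" using r by (metis power_int_of_nat int_nat_eq)
    hence "\<not> nat (s mod int m) > 0"
      using not_less_Least[of "nat (s mod int m)" "\<lambda>d. d > 0 \<and> w ^ d = 1"] r
      unfolding m_def[symmetric] by auto
    thus ?thesis using r by (simp add: dvd_eq_mod_eq_0)
  qed
  hence "int m dvd Gcd S" by (intro Gcd_greatest) auto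
  then obtain q where "Gcd S = int m * q" by (auto elim: dvdE)
  thus ?thesis using w0 m by (simp add: power_int_mult)
qed

lemma cis_2pi_div_pow_eq_1_iff:
  assumes "0 < n"
  shows "cis (2 * pi / real n) ^ t = 1 \<longleftrightarrow> n dvd t"
proof -
  have "cis (2 * pi / real n) ^ t = cis (real t * (2 * pi / real n))"
    by (rule Complex.DeMoivre)
  also have "\<dots> = exp (2 * of_real pi * \<i> * of_nat t / of_nat n)"
    using assms by (simp add: cis_conv_exp field_simps)
  finally show ?thesis using complex_root_unity_eq_1[of n t] assms by simp
qed

lemma weighted_unimodular_sum_eq_1:
  fixes g :: "'a \<Rightarrow> nat \<Rightarrow> real" and z :: "'a \<Rightarrow> nat \<Rightarrow> complex"
  assumes J: "finite J" and g_summable: "\<And>j. j \<in> J \<Longrightarrow> summable (g j)"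
    and g_nonneg: "\<And>j k. j \<in> J \<Longrightarrow> 0 \<le> g j k" and z: "\<And>j k. j \<in> J \<Longrightarrow> cmod (z j k) \<le> 1"
    and eq: "(\<Sum>j\<in>J. \<Sum>k. complex_of_real (g j k) * z j k) = complex_of_real (\<Sum>j\<in>J. \<Sum>k. g j k)"
    and j: "j \<in> J" and pos: "0 < g j k"
  shows "z j k = 1"
proof -
  have gz_summable: "summable (\<lambda>k. complex_of_real (g j k) * z j k)" if "j \<in> J" for j
    by (rule summable_comparison_test'[OF g_summable[OF that]])
       (use g_nonneg[OF that] z[OF that] in \<open>auto simp: norm_mult intro: mult_left_le\<close>)
  define d where "d j k = g j k * (1 - Re (z j k))" for j k
  have d_nonneg: "0 \<le> d j k" if "j \<in> J" for j k
    using g_nonneg[OF that, of k] complex_Re_le_cmod[of "z j k"] z[OF that, of k]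
    unfolding d_def by (intro mult_nonneg_nonneg) linarith+
  have gRe: "summable (\<lambda>k. g j k * Re (z j k))" if "j \<in> J" for j
    using summable_Re[OF gz_summable[OF that]] by simp
  have d_summable: "summable (d j)" if "j \<in> J" for j
    using summable_diff[OF g_summable[OF that] gRe[OF that]] unfolding d_def by (simp add: algebra_simps)
  have "(\<Sum>j\<in>J. suminf (d j)) = (\<Sum>j\<in>J. \<Sum>k. g j k) - (\<Sum>j\<in>J. \<Sum>k. g j k * Re (z j k))"
    using suminf_diff[OF g_summable gRe] unfolding d_def by (simp add: algebra_simps sum_subtractf)
  also have "(\<Sum>j\<in>J. \<Sum>k. g j k * Re (z j k)) = (\<Sum>j\<in>J. \<Sum>k. g j k)"
    using arg_cong[OF eq, of Re] Re_suminf[OF gz_summable] by (simp add: Re_sum)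
  finally have "(\<Sum>j\<in>J. suminf (d j)) = 0" by simp
  moreover have "0 \<le> suminf (d j)" if "j \<in> J" for j
    using suminf_nonneg[OF d_summable[OF that] d_nonneg[OF that]] .
  ultimately have "suminf (d j) = 0" using sum_nonneg_eq_0_iff[of J "\<lambda>j. suminf (d j)"] J j by blast
  hence "d j k = 0" using suminf_eq_zero_iff[OF d_summable[OF j] d_nonneg[OF j]] by simp
  hence "Re (z j k) = 1" using pos unfolding d_def by simp
  thus ?thesis using z[OF j, of k] by (auto simp: cmod_def complex_eq_iff)
qed

lemma dvd_diff_le_of_ge_minus_1:
  fixes G x y :: int
  assumes "G dvd y - x" and "y \<ge> -1" and "x \<le> G - 2"
  shows "x \<le> y"
proof (rule ccontr)
  assume "\<not> x \<le> y"
  moreover obtain q where q: "y - x = G * q"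
    using assms(1) by (auto elim: dvdE)
  moreover have "G > 0" using assms(2,3) calculation(1) by linarith
  ultimately have "G * q < 0" "G > 0" by linarith+
  hence "q \<le> -1" by (simp add: mult_less_0_iff)
  hence "G * q \<le> G * -1" using \<open>G > 0\<close> by (intro mult_left_mono) auto
  thus False using q assms(2,3) by linarith
qed

lemma diag_mult_mat_index:
  assumes X: "X \<in> carrier_mat n n" and ij: "i < n" "j < n"
  shows "(mat n n (\<lambda>(i,j). if i = j then d i else 0) * X) $$ (i, j) = d i * X $$ (i, j)"
    and "(X * mat n n (\<lambda>(i,j). if i = j then d i else 0)) $$ (i, j) = X $$ (i, j) * d j"
proof -
  have "(\<Sum>l = 0..<n. (if i = l then d i else 0) * X $$ (l, j)) = (\<Sum>l = 0..<n. if l = i then d i * X $$ (i, j) else 0)"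
    and "(\<Sum>l = 0..<n. X $$ (i, l) * (if l = j then d l else 0)) = (\<Sum>l = 0..<n. if l = j then X $$ (i, j) * d j else 0)"
    by (intro sum.cong; auto)+
  thus "(mat n n (\<lambda>(i,j). if i = j then d i else 0) * X) $$ (i, j) = d i * X $$ (i, j)"
    and "(X * mat n n (\<lambda>(i,j). if i = j then d i else 0)) $$ (i, j) = X $$ (i, j) * d j"
    using X ij by (simp_all add: scalar_prod_def)
qed

lemma order_char_poly_le_1:
  fixes X :: "complex mat"
  assumes X: "X \<in> carrier_mat n n" and dim: "dim_gen_eigenspace X e 2 \<le> 1"
  shows "order e (char_poly X) \<le> 1"
proof -
  obtain n_as where jnf: "jordan_nf X n_as"
    using char_poly_factorized[OF X] jordan_nf_exists[OF X] by blast
  define L where "L = map fst [(n, e')\<leftarrow>n_as . e' = e]"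
  have pos: "\<forall>x\<in>set L. x > 0"
    using jnf unfolding jordan_nf_def L_def by (force simp: image_iff)
  have min2: "(\<forall>x\<in>set L. x > 0) \<Longrightarrow> sum_list (map (min 2) L) \<le> 1 \<Longrightarrow> sum_list L \<le> 1" for L :: "nat list"
  proof (induction L)
    case (Cons a L)
    thus ?case by (cases L) (auto simp: min_def split: if_splits)
  qed simp
  have "sum_list L \<le> 1"
    using min2[OF pos] dim dim_gen_eigenspace[OF jnf, of e 2] unfolding L_def by simp
  thus ?thesis unfolding jordan_nf_order[OF jnf] L_def by (simp add: case_prod_unfold)
qed

section \<open>The eigenvalue selector delta\<close>

lemma delta_eqI:
  fixes X :: "complex mat"
  assumes l: "eigenvalue X l"
    and max: "\<And>m. eigenvalue X m \<Longrightarrow> cmod m \<le> cmod l \<and>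
      (cmod m = cmod l \<longrightarrow> Re m < Re l \<or> (Re m = Re l \<and> Im m \<le> Im l))"
  shows "delta X = l"
  unfolding delta_def
proof (rule the_equality)
  fix l' assume l': "eigenvalue X l' \<and> (\<forall>m. eigenvalue X m \<longrightarrow> cmod m \<le> cmod l' \<and>
      (cmod m = cmod l' \<longrightarrow> Re m < Re l' \<or> (Re m = Re l' \<and> Im m \<le> Im l')))"
  have c: "cmod l' = cmod l" using max l' l by (meson order_antisym)
  have r: "Re l' = Re l" using max l' l c by fastforce
  have "Im l' = Im l" using max l' l c r by fastforce
  thus "l' = l" using r complex_eqI by blast
qed (use assms in blast)

lemma delta_spec:
  fixes X :: "complex mat"
  assumes X: "X \<in> carrier_mat n n" and n: "n > 0"
  shows "eigenvalue X (delta X) \<and> (\<forall>m. eigenvalue X m \<longrightarrow>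
         cmod m \<le> cmod (delta X) \<and>
         (cmod m = cmod (delta X) \<longrightarrow> Re m < Re (delta X) \<or> (Re m = Re (delta X) \<and> Im m \<le> Im (delta X))))"
proof -
  define S where "S = Collect (eigenvalue X)"
  have fin: "finite S" and ne: "S \<noteq> {}"
    using card_finite_spectrum(1)[OF X] spectrum_non_empty[OF X n] unfolding S_def spectrum_def by auto
  define S1 where "S1 = {s\<in>S. cmod s = Max (cmod ` S)}"
  have fin1: "finite S1" and ne1: "S1 \<noteq> {}"
    using fin ne Max_in[of "cmod ` S"] unfolding S1_def by fastforce+
  define S2 where "S2 = {s\<in>S1. Re s = Max (Re ` S1)}"
  have fin2: "finite S2" and ne2: "S2 \<noteq> {}"
    using fin1 ne1 Max_in[of "Re ` S1"] unfolding S2_def by fastforce+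
  obtain l where l: "l \<in> S2" "Im l = Max (Im ` S2)"
    using fin2 ne2 Max_in[of "Im ` S2"] by fastforce
  have ev: "eigenvalue X l" using l unfolding S2_def S1_def S_def by auto
  have max: "cmod m \<le> cmod l \<and> (cmod m = cmod l \<longrightarrow> Re m < Re l \<or> (Re m = Re l \<and> Im m \<le> Im l))"
    if m: "eigenvalue X m" for m
  proof (intro conjI impI)
    show "cmod m \<le> cmod l" using l m fin unfolding S2_def S1_def S_def by auto
    assume "cmod m = cmod l"
    hence mS1: "m \<in> S1" using l m unfolding S2_def S1_def S_def by auto
    hence "Re m \<le> Re l" using l fin1 unfolding S2_def by auto
    moreover have "Im m \<le> Im l" if "Re m = Re l"
      using that mS1 l fin2 unfolding S2_def by auto
    ultimately show "Re m < Re l \<or> (Re m = Re l \<and> Im m \<le> Im l)" by linarith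
  qed
  show ?thesis using delta_eqI[OF ev max] ev max by simp
qed

lemma delta_eq_1I:
  fixes X :: "complex mat"
  assumes "eigenvalue X 1" and "\<And>m. eigenvalue X m \<Longrightarrow> cmod m \<le> 1"
  shows "delta X = 1"
proof (rule delta_eqI[OF assms(1)])
  fix m assume m: "eigenvalue X m"
  have "Re m < 1 \<or> m = 1" if "cmod m = 1"
    using that complex_Re_le_cmod[of m] by (auto simp: cmod_def complex_eq_iff)
  thus "cmod m \<le> cmod 1 \<and> (cmod m = cmod 1 \<longrightarrow> Re m < Re 1 \<or> (Re m = Re 1 \<and> Im m \<le> Im 1))"
    using assms(2)[OF m] by auto
qed

section \<open>Superharmonic functions of irreducible nonnegative matrices\<close>

lemma irreducible_superharmonic_zero:
  fixes q :: "nat \<Rightarrow> nat \<Rightarrow> real"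
  assumes irr: "irreducible_on {..<n} q" and q: "\<And>i j. i < n \<Longrightarrow> j < n \<Longrightarrow> q i j \<ge> 0"
    and u: "\<And>j. j < n \<Longrightarrow> 0 \<le> u j" and sub: "\<And>i. i < n \<Longrightarrow> (\<Sum>j<n. q i j * u j) \<le> u i"
    and i: "i < n" "u i = 0" and j: "j < n"
  shows "u j = 0"
proof -
  have "(i, j) \<in> {(u, v). u \<in> {..<n} \<and> v \<in> {..<n} \<and> q u v > 0}\<^sup>*"
    using irr i j unfolding irreducible_on_def by auto
  thus ?thesis
  proof (induction rule: rtrancl_induct)
    case base show ?case using i by simp
  next
    case (step a b)
    have ab: "a < n" "b < n" "q a b > 0" using step(2) by auto
    have "q a b * u b \<le> (\<Sum>l<n. q a l * u l)"
      by (rule member_le_sum) (use ab u q in auto)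
    also have "\<dots> \<le> 0" using sub[OF ab(1)] step(3) by simp
    finally show ?case using ab u[of b] by (simp add: mult_le_0_iff)
  qed
qed

lemma irreducible_stochastic_superharmonic_harmonic:
  fixes q :: "nat \<Rightarrow> nat \<Rightarrow> real"
  assumes irr: "irreducible_on {..<n} q" and q: "\<And>i j. i < n \<Longrightarrow> j < n \<Longrightarrow> q i j \<ge> 0"
    and stoch: "\<And>i. i < n \<Longrightarrow> (\<Sum>j<n. q i j) = 1"
    and sub: "\<And>i. i < n \<Longrightarrow> (\<Sum>j<n. q i j * z j) \<le> z i" and i: "i < n"
  shows "(\<Sum>j<n. q i j * z j) = z i"
proof -
  have "{..<n} \<noteq> {}" using i by auto
  then obtain j0 where j0: "j0 < n" "z j0 = Min (z ` {..<n})"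
    using Min_in[of "z ` {..<n}"] by fastforce
  define u where "u j = z j - z j0" for j
  have u0: "0 \<le> u j" if "j < n" for j unfolding u_def j0(2) using that by simp
  have usub: "(\<Sum>j<n. q i j * u j) \<le> u i" if "i < n" for i
    using sub[OF that] stoch[OF that]
    by (simp add: u_def algebra_simps sum_subtractf sum_distrib_left[symmetric])
  have "z j = z j0" if "j < n" for j
    using irreducible_superharmonic_zero[OF irr q u0 usub j0(1) _ that] by (simp add: u_def)
  thus ?thesis using stoch[OF i] i by (simp add: sum_distrib_right[symmetric])
qed

section \<open>Irreducible nonnegative matrices with spectral radius one\<close>

locale unit_perron_frobenius =
  fixes n :: nat and p :: "nat \<Rightarrow> nat \<Rightarrow> real"
  assumes n_pos: "n > 0"
    and p_nonneg: "\<And>i j. i < n \<Longrightarrow> j < n \<Longrightarrow> p i j \<ge> 0"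
    and irreducible: "irreducible_on {..<n} p"
    and eigenvalue_le_1:
      "\<And>l. eigenvalue (mat n n (\<lambda>(i,j). complex_of_real (p i j))) l \<Longrightarrow> cmod l \<le> 1"
    and eigenvalue_1: "eigenvalue (mat n n (\<lambda>(i,j). complex_of_real (p i j))) 1"
begin

abbreviation Pm :: "complex mat" where "Pm \<equiv> mat n n (\<lambda>(i,j). complex_of_real (p i j))"

definition Pf :: "(nat \<Rightarrow> real) \<Rightarrow> nat \<Rightarrow> real" where
  "Pf x i = (\<Sum>j<n. p i j * x j)"

lemma Pm_mult_vec_index: "w \<in> carrier_vec n \<Longrightarrow> i < n \<Longrightarrow> (Pm *\<^sub>v w) $ i = (\<Sum>j<n. complex_of_real (p i j) * w $ j)"
  by (simp add: scalar_prod_def lessThan_atLeast0)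

lemma Pm_pow_mult_vec:
  "Pm ^\<^sub>m k *\<^sub>v vec n (\<lambda>j. complex_of_real (x j)) = vec n (\<lambda>i. complex_of_real ((Pf ^^ k) x i))"
proof (induction k arbitrary: x)
  case (Suc k)
  have "Pm *\<^sub>v vec n (\<lambda>j. complex_of_real (x j)) = vec n (\<lambda>i. complex_of_real (Pf x i))"
    by (rule eq_vecI) (auto simp: Pf_def scalar_prod_def lessThan_atLeast0)
  hence "Pm ^\<^sub>m Suc k *\<^sub>v vec n (\<lambda>j. complex_of_real (x j))
      = vec n (\<lambda>i. complex_of_real ((Pf ^^ k) (Pf x) i))"
    by (simp add: assoc_mult_mat_vec[of _ n n _ n] Suc)
  thus ?case by (simp add: funpow_Suc_right del: funpow.simps)
qed (rule eq_vecI; simp)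

lemma Pf_mono: "(\<And>j. j < n \<Longrightarrow> x j \<le> z j) \<Longrightarrow> i < n \<Longrightarrow> Pf x i \<le> Pf z i"
  unfolding Pf_def by (intro sum_mono mult_left_mono) (auto simp: p_nonneg)

lemma Pf_nonneg: "(\<And>j. j < n \<Longrightarrow> 0 \<le> x j) \<Longrightarrow> i < n \<Longrightarrow> 0 \<le> Pf x i"
  unfolding Pf_def by (intro sum_nonneg mult_nonneg_nonneg) (auto simp: p_nonneg)

lemma Pf_smult: "Pf (\<lambda>j. c * x j) i = c * Pf x i"
  unfolding Pf_def by (simp add: sum_distrib_left algebra_simps)

lemma Pf_add: "Pf (\<lambda>j. x j + z j) i = Pf x i + Pf z i"
  unfolding Pf_def by (simp add: sum.distrib algebra_simps)

lemma Pf_diff: "Pf (\<lambda>j. x j - z j) i = Pf x i - Pf z i"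
  unfolding Pf_def by (simp add: sum_subtractf algebra_simps)

lemma Pf_sum: "Pf (\<lambda>j. \<Sum>m\<in>A. f m j) i = (\<Sum>m\<in>A. Pf (f m) i)"
  unfolding Pf_def by (simp add: sum_distrib_left sum.swap[of _ A])

lemma Pf_abs: "i < n \<Longrightarrow> \<bar>Pf x i\<bar> \<le> Pf (\<lambda>j. \<bar>x j\<bar>) i"
  unfolding Pf_def by (rule order_trans[OF sum_abs]) (auto simp: abs_mult p_nonneg intro!: sum_mono)

lemma Pf_cong: "(\<And>j. j < n \<Longrightarrow> x j = z j) \<Longrightarrow> Pf x i = Pf z i"
  unfolding Pf_def by auto

lemma Pf_pow_nonneg: "(\<And>j. j < n \<Longrightarrow> 0 \<le> x j) \<Longrightarrow> i < n \<Longrightarrow> 0 \<le> (Pf ^^ k) x i"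
  by (induction k arbitrary: i) (auto intro!: Pf_nonneg)

lemma Pf_pow_mono: "(\<And>j. j < n \<Longrightarrow> x j \<le> z j) \<Longrightarrow> i < n \<Longrightarrow> (Pf ^^ k) x i \<le> (Pf ^^ k) z i"
  by (induction k arbitrary: i) (auto intro!: Pf_mono)

lemma Pf_pow_abs: "i < n \<Longrightarrow> \<bar>(Pf ^^ k) x i\<bar> \<le> (Pf ^^ k) (\<lambda>j. \<bar>x j\<bar>) i"
proof (induction k arbitrary: i)
  case (Suc k)
  have "\<bar>Pf ((Pf ^^ k) x) i\<bar> \<le> Pf (\<lambda>j. \<bar>(Pf ^^ k) x j\<bar>) i" by (rule Pf_abs[OF Suc.prems])
  also have "\<dots> \<le> Pf ((Pf ^^ k) (\<lambda>j. \<bar>x j\<bar>)) i" by (rule Pf_mono[OF Suc.IH Suc.prems])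
  finally show ?case by simp
qed simp

lemma Pf_pow_diff: "(Pf ^^ m) (\<lambda>j. x j - z j) = (\<lambda>i. (Pf ^^ m) x i - (Pf ^^ m) z i)"
  by (induction m) (simp_all add: Pf_diff)

lemma spectral_radius_le_1: "spectral_radius Pm \<le> 1"
  using spectral_radius_mem_max(1)[of Pm n] n_pos eigenvalue_le_1 unfolding spectrum_def by auto

lemma Pf_pow_polynomial_bound:
  obtains c1 c2 where "\<And>k y i. (\<And>j. j < n \<Longrightarrow> 0 \<le> y j) \<Longrightarrow> i < n \<Longrightarrow>
    (Pf ^^ k) y i \<le> (c1 + c2 * real k ^ (n - 1)) * (\<Sum>j<n. y j)"
proof -
  obtain c1 c2 where nb: "\<And>k. norm_bound (Pm ^\<^sub>m k) (c1 + c2 * of_nat k ^ (n - 1))"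
    using spectral_radius_jnf_norm_bound_le_1_upper_triangular[OF _ spectral_radius_le_1] by fastforce
  have bound: "(Pf ^^ k) y i \<le> (c1 + c2 * real k ^ (n - 1)) * (\<Sum>j<n. y j)"
    if y: "\<And>j. j < n \<Longrightarrow> 0 \<le> y j" and i: "i < n" for k y i
  proof -
    have "complex_of_real ((Pf ^^ k) y i) = (Pm ^\<^sub>m k *\<^sub>v vec n (\<lambda>j. complex_of_real (y j))) $ i"
      using Pm_pow_mult_vec[of k y] i by simp
    also have "\<dots> = (\<Sum>j<n. (Pm ^\<^sub>m k) $$ (i, j) * complex_of_real (y j))"
      using i by (simp add: scalar_prod_def lessThan_atLeast0)
    finally have "(Pf ^^ k) y i \<le> cmod (\<Sum>j<n. (Pm ^\<^sub>m k) $$ (i, j) * complex_of_real (y j))"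
      by (metis norm_of_real abs_ge_self)
    also have "\<dots> \<le> (\<Sum>j<n. cmod ((Pm ^\<^sub>m k) $$ (i, j)) * y j)"
      by (rule order_trans[OF norm_sum]) (auto simp: norm_mult y)
    also have "\<dots> \<le> (\<Sum>j<n. (c1 + c2 * real k ^ (n - 1)) * y j)"
      using nb[of k] i y unfolding norm_bound_def by (intro sum_mono mult_right_mono) auto
    finally show ?thesis by (simp add: sum_distrib_left)
  qed
  show ?thesis using bound by (rule that)
qed

text \<open>Geometric growth is impossible because, by the Jordan normal form, the powers of a matrix
  with spectral radius at most one grow at most polynomially.\<close>

lemma no_geometric_growth:
  assumes y: "\<And>j. j < n \<Longrightarrow> 0 \<le> y j" and i0: "i0 < n"
    and lam: "lam > 1" and growth: "\<And>i. i < n \<Longrightarrow> lam * y i \<le> Pf y i"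
  shows "y i0 = 0"
proof -
  obtain c1 c2 where bound: "\<And>k x i. (\<And>j. j < n \<Longrightarrow> 0 \<le> x j) \<Longrightarrow> i < n \<Longrightarrow>
      (Pf ^^ k) x i \<le> (c1 + c2 * real k ^ (n - 1)) * (\<Sum>j<n. x j)"
    using Pf_pow_polynomial_bound by blast
  have grow: "lam ^ k * y i \<le> (Pf ^^ k) y i" if "i < n" for k i
    using that
  proof (induction k arbitrary: i)
    case (Suc k)
    have "lam ^ Suc k * y i \<le> lam ^ k * Pf y i"
      using growth[OF Suc.prems] lam by (simp add: mult.assoc mult_left_mono)
    also have "\<dots> = Pf (\<lambda>j. lam ^ k * y j) i" by (simp add: Pf_smult)
    also have "\<dots> \<le> Pf ((Pf ^^ k) y) i" by (rule Pf_mono[OF Suc.IH Suc.prems])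
    finally show ?case by simp
  qed simp
  define f where "f d k = real k ^ d / lam ^ k" for d k
  define Y where "Y = (\<Sum>j<n. y j)"
  have "y i0 \<le> (c1 * f 0 k + c2 * f (n - 1) k) * Y" for k
  proof -
    have "lam ^ k * y i0 \<le> (c1 + c2 * real k ^ (n - 1)) * Y"
      using grow[OF i0] bound[OF y i0] unfolding Y_def by (rule order_trans)
    thus ?thesis using lam unfolding f_def by (simp add: field_simps)
  qed
  moreover have "(\<lambda>k. (c1 * f 0 k + c2 * f (n - 1) k) * Y) \<longlonglongrightarrow> (c1 * 0 + c2 * 0) * Y"
    unfolding f_def by (intro tendsto_intros polynomial_over_exponential_LIMSEQ_zero lam)
  ultimately have "y i0 \<le> 0" by (intro LIMSEQ_le_const[of _ _ "y i0"]) auto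
  thus ?thesis using y[OF i0] by simp
qed

lemma exists_Pf_pow_pos:
  assumes i: "i < n" and j: "j < n"
  shows "\<exists>m. \<forall>x. (\<forall>l<n. 0 \<le> x l) \<longrightarrow> 0 < x j \<longrightarrow> 0 < (Pf ^^ m) x i"
proof -
  have "(i, j) \<in> {(u, v). u \<in> {..<n} \<and> v \<in> {..<n} \<and> p u v > 0}\<^sup>*"
    using irreducible i j unfolding irreducible_on_def by auto
  thus ?thesis
  proof (induction rule: converse_rtrancl_induct)
    case base
    show ?case by (rule exI[of _ 0]) auto
  next
    case (step i k)
    then obtain m where m: "\<And>x. \<forall>l<n. 0 \<le> x l \<Longrightarrow> 0 < x j \<Longrightarrow> 0 < (Pf ^^ m) x k" by blast
    have ik: "i < n" "k < n" "p i k > 0" using step(1) by auto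
    have "0 < (Pf ^^ Suc m) x i" if x: "\<forall>l<n. 0 \<le> x l" "0 < x j" for x
    proof -
      have "0 < p i k * (Pf ^^ m) x k" using m[OF x] ik by simp
      also have "\<dots> \<le> (\<Sum>l<n. p i l * (Pf ^^ m) x l)"
        by (rule member_le_sum) (use ik x in \<open>auto intro: mult_nonneg_nonneg p_nonneg Pf_pow_nonneg\<close>)
      finally show ?thesis by (simp add: Pf_def)
    qed
    thus ?case by blast
  qed
qed

lemma exists_Pf_pow_sum_pos:
  assumes x: "\<And>l. l < n \<Longrightarrow> 0 \<le> x l" and j: "j < n" "0 < x j"
  shows "\<exists>N. \<forall>i<n. 0 < (\<Sum>m<N. (Pf ^^ m) x i)"
proof -
  obtain mm where mm: "\<And>i. i < n \<Longrightarrow> 0 < (Pf ^^ mm i) x i"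
    using exists_Pf_pow_pos[OF _ j(1)] x j(2) by metis
  have "0 < (\<Sum>m<Suc (Max (mm ` {..<n})). (Pf ^^ m) x i)" if i: "i < n" for i
  proof -
    have "mm i < Suc (Max (mm ` {..<n}))" using i by (simp add: le_imp_less_Suc)
    hence "(Pf ^^ mm i) x i \<le> (\<Sum>m<Suc (Max (mm ` {..<n})). (Pf ^^ m) x i)"
      by (intro member_le_sum) (use i x in \<open>auto intro: Pf_pow_nonneg\<close>)
    thus ?thesis using mm[OF i] by linarith
  qed
  thus ?thesis by blast
qed

lemma Pf_not_strictly_increasing:
  assumes z: "\<And>j. j < n \<Longrightarrow> 0 \<le> z j" and j0: "j0 < n" "0 < z j0"
    and inc: "\<And>j. j < n \<Longrightarrow> z j < Pf z j"
  shows False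
proof -
  define eps where "eps = Min ((\<lambda>j. Pf z j - z j) ` {..<n})"
  define Z where "Z = Max (z ` {..<n})"
  have eps: "0 < eps" unfolding eps_def using inc n_pos by (subst Min_gr_iff) auto
  have zle: "z j \<le> Z" if "j < n" for j unfolding Z_def using that by auto
  have Z: "0 < Z" using zle[OF j0(1)] j0(2) by linarith
  have "z j0 = 0"
  proof (rule no_geometric_growth[of z j0 "1 + eps / Z", OF z j0(1)])
    fix j assume j: "j < n"
    have "eps \<le> Pf z j - z j" unfolding eps_def using j by auto
    moreover have "eps / Z * z j \<le> eps"
      using zle[OF j] Z eps z[OF j] by (simp add: field_simps mult_left_mono)
    ultimately show "(1 + eps / Z) * z j \<le> Pf z j" by (simp add: algebra_simps)
  qed (use eps Z in auto)
  thus False using j0(2) by simp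
qed

text \<open>If \<open>Pf y - y\<close> were nonzero, then by irreducibility \<open>z = (\<Sum>m<N. Pf^m y)\<close> would be
  strictly increased by \<open>Pf\<close> for large \<open>N\<close>.\<close>

lemma Pf_eq_of_le:
  assumes y: "\<And>j. j < n \<Longrightarrow> 0 \<le> y j" and j0: "j0 < n" "0 < y j0"
    and le: "\<And>i. i < n \<Longrightarrow> y i \<le> Pf y i" and i: "i < n"
  shows "Pf y i = y i"
proof (rule ccontr)
  assume "Pf y i \<noteq> y i"
  define x where "x j = Pf y j - y j" for j
  have x: "\<And>l. l < n \<Longrightarrow> 0 \<le> x l" unfolding x_def using le by simp
  have "0 < x i" unfolding x_def using le[OF i] \<open>Pf y i \<noteq> y i\<close> by linarith
  then obtain N where N: "\<And>j. j < n \<Longrightarrow> 0 < (\<Sum>m<N. (Pf ^^ m) x j)"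
    using exists_Pf_pow_sum_pos[of x i, OF x i] by blast
  have "N \<noteq> 0" using N[OF i] by (intro notI) simp
  define z where "z j = (\<Sum>m<N. (Pf ^^ m) y j)" for j
  have zy: "y j \<le> z j" if j: "j < n" for j
  proof -
    have "(Pf ^^ 0) y j \<le> z j"
      unfolding z_def by (rule member_le_sum) (use \<open>N \<noteq> 0\<close> j y in \<open>auto intro: Pf_pow_nonneg\<close>)
    thus ?thesis by simp
  qed
  show False
  proof (rule Pf_not_strictly_increasing[of z j0])
    show "\<And>j. j < n \<Longrightarrow> 0 \<le> z j" using zy y by (meson order_trans)
    show "j0 < n" "0 < z j0" using j0 zy[OF j0(1)] by auto
    fix j assume j: "j < n"
    have "Pf z j - z j = (\<Sum>m<N. (Pf ^^ Suc m) y j - (Pf ^^ m) y j)"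
      unfolding z_def Pf_sum by (simp add: sum_subtractf)
    also have "\<dots> = (\<Sum>m<N. (Pf ^^ m) x j)"
      unfolding x_def Pf_pow_diff by (simp add: funpow_Suc_right del: funpow.simps)
    finally show "z j < Pf z j" using N[OF j] by simp
  qed
qed

lemma pos_of_superharmonic:
  assumes u: "\<And>j. j < n \<Longrightarrow> 0 \<le> u j" and sub: "\<And>j. j < n \<Longrightarrow> Pf u j \<le> u j"
    and j0: "j0 < n" "u j0 \<noteq> 0" and i: "i < n"
  shows "0 < u i"
proof (rule ccontr)
  assume "\<not> 0 < u i"
  hence "u i = 0" using u[OF i] by simp
  moreover have "\<And>i. i < n \<Longrightarrow> (\<Sum>j<n. p i j * u j) \<le> u i" using sub unfolding Pf_def .
  ultimately have "u j0 = 0"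
    using irreducible_superharmonic_zero[of n p u, OF irreducible p_nonneg u _ i _ j0(1)] by blast
  thus False using j0(2) by simp
qed

lemma exists_perron: "\<exists>y. (\<forall>i<n. 0 < y i) \<and> (\<forall>i<n. Pf y i = y i)"
proof -
  obtain v where v: "v \<in> carrier_vec n" "v \<noteq> 0\<^sub>v n" "Pm *\<^sub>v v = v"
    using eigenvalue_1 unfolding eigenvalue_def eigenvector_def by auto
  obtain j0 where j0: "j0 < n" "v $ j0 \<noteq> 0" using v(1,2) by (metis eq_vecI carrier_vecD index_zero_vec)
  define y where "y j = cmod (v $ j)" for j
  have y0: "\<And>j. j < n \<Longrightarrow> 0 \<le> y j" and yj0: "0 < y j0" unfolding y_def using j0 by auto
  have "y i \<le> Pf y i" if i: "i < n" for i
  proof -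
    have "y i = cmod (\<Sum>j<n. complex_of_real (p i j) * v $ j)"
      using Pm_mult_vec_index[OF v(1) i] v(3) unfolding y_def by simp
    also have "\<dots> \<le> Pf y i"
      unfolding Pf_def y_def by (rule order_trans[OF norm_sum]) (simp add: norm_mult p_nonneg i)
    finally show ?thesis .
  qed
  hence fixed: "\<And>i. i < n \<Longrightarrow> Pf y i = y i" using Pf_eq_of_le[of y j0, OF y0 j0(1) yj0] by blast
  have "\<And>i. i < n \<Longrightarrow> 0 < y i"
    using pos_of_superharmonic[of y j0, OF y0 _ j0(1)] fixed yj0 by simp
  thus ?thesis using fixed by blast
qed

definition perron :: "nat \<Rightarrow> real" where
  "perron = (SOME y. (\<forall>i<n. 0 < y i) \<and> (\<forall>i<n. Pf y i = y i))"

lemma perron_pos: "i < n \<Longrightarrow> 0 < perron i"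
  and Pf_perron: "i < n \<Longrightarrow> Pf perron i = perron i"
  using someI_ex[OF exists_perron] unfolding perron_def[symmetric] by auto

lemma Pf_fixed_eq_multiple_perron:
  assumes r: "\<And>i. i < n \<Longrightarrow> Pf r i = r i"
  shows "\<exists>c. \<forall>i<n. r i = c * perron i"
proof -
  define c where "c = Min ((\<lambda>i. r i / perron i) ` {..<n})"
  obtain i0 where i0: "i0 < n" "c = r i0 / perron i0"
    unfolding c_def using n_pos Min_in[of "(\<lambda>i. r i / perron i) ` {..<n}"] by fastforce
  define u where "u j = r j - c * perron j" for j
  have "c \<le> r j / perron j" if "j < n" for j unfolding c_def using that by auto
  hence u0: "\<And>j. j < n \<Longrightarrow> 0 \<le> u j"
    unfolding u_def using perron_pos by (simp add: field_simps)
  have "(\<Sum>j<n. p i j * u j) \<le> u i" if "i < n" for i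
    using r[OF that] Pf_perron[OF that] unfolding u_def Pf_diff[unfolded Pf_def] Pf_smult[unfolded Pf_def]
    by (simp add: Pf_def)
  moreover have "u i0 = 0" unfolding u_def using i0 perron_pos[OF i0(1)] by simp
  ultimately have "u j = 0" if "j < n" for j
    using irreducible_superharmonic_zero[of n p u, OF irreducible p_nonneg u0 _ i0(1) _ that] by blast
  thus ?thesis unfolding u_def by (intro exI[of _ c]) auto
qed

lemma Pf_pow_perron: "i < n \<Longrightarrow> (Pf ^^ k) (\<lambda>j. K * perron j) i = K * perron i"
proof (induction k arbitrary: i)
  case (Suc k)
  have "Pf ((Pf ^^ k) (\<lambda>j. K * perron j)) i = Pf (\<lambda>j. K * perron j) i"
    by (rule Pf_cong) (use Suc.IH in auto)
  thus ?case using Pf_perron[OF Suc.prems] by (simp add: Pf_smult)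
qed simp

text \<open>If \<open>Pf v - v\<close> is fixed, it is \<open>c * perron\<close>, so the iterates \<open>v + k c perron\<close>
  of \<open>v\<close> stay dominated by a multiple of \<open>perron\<close> only if \<open>c = 0\<close>.\<close>

lemma Pf_fixed_of_defect_fixed:
  assumes defect: "\<And>i. i < n \<Longrightarrow> Pf (\<lambda>j. Pf v j - v j) i = Pf v i - v i" and i: "i < n"
  shows "Pf v i = v i"
proof -
  obtain c where c: "\<And>i. i < n \<Longrightarrow> Pf v i - v i = c * perron i"
    using Pf_fixed_eq_multiple_perron[OF defect] by auto
  have iterate: "(Pf ^^ k) v i = v i + real k * c * perron i" if "i < n" for k i
    using that
  proof (induction k arbitrary: i)
    case (Suc k)
    have "(Pf ^^ Suc k) v i = Pf (\<lambda>j. v j + (real k * c) * perron j) i"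
      by (simp, rule Pf_cong) (use Suc.IH in auto)
    also have "\<dots> = v i + real (Suc k) * c * perron i"
      unfolding Pf_add Pf_smult using Pf_perron[OF Suc.prems] c[OF Suc.prems]
      by (simp add: algebra_simps)
    finally show ?case .
  qed simp
  define K where "K = Max ((\<lambda>j. \<bar>v j\<bar> / perron j) ` {..<n})"
  have dominated: "\<bar>v j\<bar> \<le> K * perron j" if j: "j < n" for j
  proof -
    have "\<bar>v j\<bar> / perron j \<le> K" unfolding K_def using j by auto
    thus ?thesis using perron_pos[OF j] by (simp add: field_simps)
  qed
  have bounded: "\<bar>v 0 + real k * c * perron 0\<bar> \<le> K * perron 0" for k
  proof -
    have "\<bar>(Pf ^^ k) v 0\<bar> \<le> (Pf ^^ k) (\<lambda>j. \<bar>v j\<bar>) 0" by (rule Pf_pow_abs[OF n_pos])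
    also have "\<dots> \<le> (Pf ^^ k) (\<lambda>j. K * perron j) 0" by (rule Pf_pow_mono[OF dominated n_pos])
    also have "\<dots> = K * perron 0" by (rule Pf_pow_perron[OF n_pos])
    finally show ?thesis using iterate[OF n_pos] by simp
  qed
  have "c = 0"
  proof (rule ccontr)
    assume "c \<noteq> 0"
    have p0: "0 < perron 0" using perron_pos[OF n_pos] .
    obtain k :: nat where k: "(K * perron 0 + \<bar>v 0\<bar>) / (\<bar>c\<bar> * perron 0) < real k"
      using reals_Archimedean2 by blast
    hence "K * perron 0 + \<bar>v 0\<bar> < \<bar>real k * c * perron 0\<bar>"
      using \<open>c \<noteq> 0\<close> p0 by (simp add: field_simps abs_mult)
    thus False using bounded[of k] by linarith
  qed
  thus ?thesis using c[OF i] by simp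
qed

text \<open>The eigenvalue \<open>1\<close> is simple: the kernel of \<open>(Pm - 1)\<^sup>2\<close> is spanned by the Perron vector,
  which rules out a second Jordan block and a block of size \<open>\<ge> 2\<close>.\<close>

abbreviation CM :: "complex mat" where "CM \<equiv> char_matrix Pm 1"

abbreviation perron_vec :: "complex vec" where "perron_vec \<equiv> vec n (\<lambda>j. complex_of_real (perron j))"

lemma CM_dim [simp]: "dim_row CM = n" "dim_col CM = n"
  by (simp_all add: char_matrix_def)

lemma CM_carrier: "CM \<in> carrier_mat n n"
  by (rule carrier_matI) simp_all

lemma CM_mult_vec_index:
  assumes w: "w \<in> carrier_vec n" and i: "i < n"
  shows "(CM *\<^sub>v w) $ i = (\<Sum>j<n. complex_of_real (p i j) * w $ j) - w $ i"
proof -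
  have "(CM *\<^sub>v w) $ i = (\<Sum>j<n. CM $$ (i, j) * w $ j)"
    using w i by (simp add: scalar_prod_def lessThan_atLeast0)
  also have "\<dots> = (\<Sum>j<n. complex_of_real (p i j) * w $ j - (if j = i then w $ j else 0))"
    using i by (intro sum.cong) (auto simp: char_matrix_def algebra_simps)
  also have "\<dots> = (\<Sum>j<n. complex_of_real (p i j) * w $ j) - w $ i"
    using i by (simp add: sum_subtractf)
  finally show ?thesis .
qed

lemma Re_CM_mult_vec_index:
  assumes "w \<in> carrier_vec n" and "i < n"
  shows "Re ((CM *\<^sub>v w) $ i) = Pf (\<lambda>j. Re (w $ j)) i - Re (w $ i)"
proof -
  have "Re (\<Sum>j<n. complex_of_real (p i j) * w $ j) = Pf (\<lambda>j. Re (w $ j)) i"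
    unfolding Pf_def by (simp add: Re_sum)
  thus ?thesis by (simp only: CM_mult_vec_index[OF assms] minus_complex.sel)
qed

lemma CM_pow2_mult_vec: "v \<in> carrier_vec n \<Longrightarrow> CM ^\<^sub>m 2 *\<^sub>v v = CM *\<^sub>v (CM *\<^sub>v v)"
  by (simp add: numeral_2_eq_2 assoc_mult_mat_vec[of _ n n _ n])

lemma Re_kernel_multiple_perron:
  assumes v: "v \<in> mat_kernel (CM ^\<^sub>m 2)"
  shows "\<exists>c. \<forall>i<n. Re (v $ i) = c * perron i"
proof -
  have vc: "v \<in> carrier_vec n" and "CM ^\<^sub>m 2 *\<^sub>v v = 0\<^sub>v n"
    using mat_kernelD[of "CM ^\<^sub>m 2" n n v] v by auto
  hence CCv: "CM *\<^sub>v (CM *\<^sub>v v) = 0\<^sub>v n" by (simp only: CM_pow2_mult_vec)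
  define f where "f j = Re (v $ j)" for j
  have Cv: "CM *\<^sub>v v \<in> carrier_vec n" using mult_mat_vec_carrier[OF CM_carrier vc] .
  have Re_Cv: "Re ((CM *\<^sub>v v) $ j) = Pf f j - f j" if "j < n" for j
    unfolding f_def by (rule Re_CM_mult_vec_index[OF vc that])
  have defect: "Pf (\<lambda>j. Pf f j - f j) i = Pf f i - f i" if i: "i < n" for i
  proof -
    have "0 = Re ((CM *\<^sub>v (CM *\<^sub>v v)) $ i)"
      using arg_cong[OF CCv, of "\<lambda>x. Re (x $ i)"] i by (simp only: index_zero_vec(1) zero_complex.sel)
    also have "\<dots> = Pf (\<lambda>j. Re ((CM *\<^sub>v v) $ j)) i - Re ((CM *\<^sub>v v) $ i)"
      by (rule Re_CM_mult_vec_index[OF Cv i])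
    also have "\<dots> = Pf (\<lambda>j. Pf f j - f j) i - (Pf f i - f i)"
      by (simp only: Re_Cv[OF i] Pf_cong[OF Re_Cv])
    finally show ?thesis by simp
  qed
  have "Pf f i = f i" if "i < n" for i by (rule Pf_fixed_of_defect_fixed[OF defect that])
  from Pf_fixed_eq_multiple_perron[OF this] show ?thesis unfolding f_def .
qed

text \<open>The imaginary part of \<open>v\<close> is the real part of \<open>-\<i> v\<close>, which lies in the kernel too.\<close>

lemma kernel_multiple_perron:
  assumes v: "v \<in> mat_kernel (CM ^\<^sub>m 2)"
  shows "\<exists>c. v = c \<cdot>\<^sub>v perron_vec"
proof -
  have vc: "v \<in> carrier_vec n" using mat_kernelD[of "CM ^\<^sub>m 2" n n v] v by auto
  obtain c1 where c1: "\<And>i. i < n \<Longrightarrow> Re (v $ i) = c1 * perron i"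
    using Re_kernel_multiple_perron[OF v] by blast
  have "-\<i> \<cdot>\<^sub>v v \<in> mat_kernel (CM ^\<^sub>m 2)" by (rule mat_kernel_smult[of _ n n]) (use v in auto)
  then obtain c2 where "\<And>i. i < n \<Longrightarrow> Re ((-\<i> \<cdot>\<^sub>v v) $ i) = c2 * perron i"
    using Re_kernel_multiple_perron by blast
  hence c2: "\<And>i. i < n \<Longrightarrow> Im (v $ i) = c2 * perron i" using vc by simp
  have "v = Complex c1 c2 \<cdot>\<^sub>v perron_vec"
    by (rule eq_vecI) (use vc c1 c2 in \<open>auto simp: complex_eq_iff\<close>)
  thus ?thesis ..
qed

lemma perron_vec_kernel: "perron_vec \<in> mat_kernel (CM ^\<^sub>m 2)"
proof -
  have "CM *\<^sub>v perron_vec = 0\<^sub>v n"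
  proof (rule eq_vecI)
    fix i assume "i < dim_vec (0\<^sub>v n :: complex vec)"
    hence i: "i < n" by simp
    have "(\<Sum>j<n. complex_of_real (p i j) * perron_vec $ j) = complex_of_real (Pf perron i)"
      unfolding Pf_def by simp
    thus "(CM *\<^sub>v perron_vec) $ i = 0\<^sub>v n $ i"
      unfolding CM_mult_vec_index[OF vec_carrier i] using Pf_perron[OF i] i by simp
  qed simp
  hence "CM ^\<^sub>m 2 *\<^sub>v perron_vec = 0\<^sub>v n"
    by (simp only: CM_pow2_mult_vec[of perron_vec] vec_carrier) (rule eq_vecI; simp add: scalar_prod_def)
  thus ?thesis by (intro mat_kernelI[of _ n n]) auto
qed

lemma dim_gen_eigenspace_1_le_1: "dim_gen_eigenspace Pm 1 2 \<le> 1"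
proof -
  interpret K: kernel n n "CM ^\<^sub>m 2" by unfold_locales simp
  have sub: "{perron_vec} \<subseteq> mat_kernel (CM ^\<^sub>m 2)" using perron_vec_kernel by simp
  have "mat_kernel (CM ^\<^sub>m 2) \<subseteq> K.span {perron_vec}"
  proof
    fix v assume "v \<in> mat_kernel (CM ^\<^sub>m 2)"
    then obtain c where c: "v = c \<cdot>\<^sub>v perron_vec" using kernel_multiple_perron by blast
    have "submodule class_ring (K.span {perron_vec}) K.VK" using K.Ker.span_is_submodule[OF sub] by simp
    thus "v \<in> K.span {perron_vec}" using K.Ker.in_own_span[OF sub] unfolding c submodule_def by simp
  qed
  hence "K.span {perron_vec} = mat_kernel (CM ^\<^sub>m 2)" using K.Ker.span_is_subset2[OF sub] by auto
  hence "K.dim \<le> card {perron_vec}" by (intro K.Ker.gen_ge_dim) (use sub in auto)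
  thus ?thesis unfolding dim_gen_eigenspace_def by simp
qed

lemma order_char_poly_1: "order 1 (char_poly Pm) = 1"
proof -
  have "order 1 (char_poly Pm) \<le> 1"
    by (rule order_char_poly_le_1[of Pm n, OF _ dim_gen_eigenspace_1_le_1]) simp
  moreover have "poly (char_poly Pm) 1 = 0" "char_poly Pm \<noteq> 0"
    using eigenvalue_1 eigenvalue_root_char_poly[of Pm n] degree_monic_char_poly[of Pm n] by auto
  hence "order 1 (char_poly Pm) \<noteq> 0" using order_root by blast
  ultimately show ?thesis by linarith
qed

end

section \<open>The matrices \<open>\<Gamma>\<^sub>A\<^sup>*(\<theta>w)\<close> for \<open>|w| = 1\<close>\<close>

locale mg1_theta =
  fixes M :: nat and A :: "nat \<Rightarrow> real mat" and \<theta> :: real and pi :: "nat \<Rightarrow> real"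
  assumes M_pos: "M > 0"
    and A_nonneg: "\<And>k i j. i < M \<Longrightarrow> j < M \<Longrightarrow> A k $$ (i, j) \<ge> 0"
    and A_summable: "\<And>i j. i < M \<Longrightarrow> j < M \<Longrightarrow> summable (\<lambda>k. A k $$ (i, j))"
    and A_stoch: "\<And>i. i < M \<Longrightarrow> (\<Sum>j<M. Asum A i j) = 1"
    and pi_stat: "\<And>j. j < M \<Longrightarrow> (\<Sum>i<M. pi i * Asum A i j) = pi j"
    and pi_norm: "(\<Sum>i<M. pi i) = 1"
    and A_irred: "irreducible_on {..<M} (Asum A)"
    and rho_lt1: "(\<Sum>i<M. pi i * (\<Sum>k. real k * (\<Sum>j<M. A k $$ (i, j)))) < 1"
    and theta_gt1: "1 < \<theta>" and theta_lt: "ereal \<theta> < rA M A"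
    and theta_delta: "complex_of_real \<theta> = delta (Astar M A (complex_of_real \<theta>))"
begin

abbreviation a :: "nat \<Rightarrow> nat \<Rightarrow> nat \<Rightarrow> real" where "a k i j \<equiv> A k $$ (i, j)"

lemma summable_theta_series:
  assumes "i < M" "j < M"
  shows "summable (\<lambda>k. \<theta> ^ k * a k i j)"
proof -
  have "rA M A \<le> conv_radius (\<lambda>k. a k i j)" unfolding rA_def using assms by (intro INF_lower) auto
  hence "ereal \<theta> < conv_radius (\<lambda>k. a k i j)" using theta_lt by simp
  thus ?thesis using summable_in_conv_radius[of \<theta> "\<lambda>k. a k i j"] theta_gt1 by (simp add: mult.commute)
qed

lemma summable_Gamma_series:
  assumes "i < M" "j < M" "cmod w = 1"
  shows "summable (\<lambda>k. (complex_of_real \<theta> * w) ^ k * complex_of_real (a k i j))"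
proof (rule summable_norm_cancel)
  have "norm ((complex_of_real \<theta> * w) ^ k * complex_of_real (a k i j)) = \<theta> ^ k * a k i j" for k
    using assms theta_gt1 A_nonneg by (simp add: norm_mult norm_power)
  thus "summable (\<lambda>k. norm ((complex_of_real \<theta> * w) ^ k * complex_of_real (a k i j)))"
    using summable_theta_series[OF assms(1,2)] by simp
qed

definition p :: "nat \<Rightarrow> nat \<Rightarrow> real" where
  "p i j = (\<Sum>k. \<theta> ^ k * a k i j) / \<theta>"

lemma p_nonneg: "i < M \<Longrightarrow> j < M \<Longrightarrow> 0 \<le> p i j"
  unfolding p_def using theta_gt1 A_nonneg
  by (intro divide_nonneg_pos suminf_nonneg summable_theta_series) auto

lemma Asum_nonneg: "i < M \<Longrightarrow> j < M \<Longrightarrow> 0 \<le> Asum A i j"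
  unfolding Asum_def by (intro suminf_nonneg A_summable A_nonneg)

lemma Asum_pos_iff: "i < M \<Longrightarrow> j < M \<Longrightarrow> 0 < Asum A i j \<longleftrightarrow> (\<exists>k. 0 < a k i j)"
  unfolding Asum_def by (rule suminf_pos_iff) (auto simp: A_summable A_nonneg)

lemma p_pos_iff:
  assumes "i < M" "j < M"
  shows "0 < p i j \<longleftrightarrow> (\<exists>k. 0 < a k i j)"
proof -
  have "0 < p i j \<longleftrightarrow> 0 < (\<Sum>k. \<theta> ^ k * a k i j)"
    unfolding p_def using theta_gt1 by (simp add: zero_less_divide_iff)
  also have "\<dots> \<longleftrightarrow> (\<exists>k. 0 < \<theta> ^ k * a k i j)"
    by (rule suminf_pos_iff) (use assms theta_gt1 A_nonneg in \<open>auto simp: summable_theta_series\<close>)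
  finally show ?thesis using theta_gt1 by (simp add: zero_less_mult_iff)
qed

lemma irreducible_p: "irreducible_on {..<M} p"
proof -
  have "{(u, v). u \<in> {..<M} \<and> v \<in> {..<M} \<and> 0 < Asum A u v}
      = {(u, v). u \<in> {..<M} \<and> v \<in> {..<M} \<and> 0 < p u v}"
    using Asum_pos_iff p_pos_iff by auto
  thus ?thesis using A_irred unfolding irreducible_on_def by simp
qed

abbreviation Gam :: "complex \<Rightarrow> complex mat" where
  "Gam w \<equiv> GammaStar M A (complex_of_real \<theta> * w)"

lemma Gamma_carrier: "GammaStar M A z \<in> carrier_mat M M"
  and Gamma_dim [simp]: "dim_row (GammaStar M A z) = M" "dim_col (GammaStar M A z) = M"
  unfolding GammaStar_def Astar_def by simp_all

lemma Gamma_index: "i < M \<Longrightarrow> j < M \<Longrightarrow>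
   GammaStar M A z $$ (i, j) = inverse z * (\<Sum>k. z ^ k * complex_of_real (a k i j))"
  unfolding GammaStar_def Astar_def by simp

lemma Gamma_mult_vec_index:
  "v \<in> carrier_vec M \<Longrightarrow> i < M \<Longrightarrow> (Gam w *\<^sub>v v) $ i = (\<Sum>j<M. Gam w $$ (i, j) * v $ j)"
  using Gamma_carrier[of "complex_of_real \<theta> * w"]
  by (simp add: scalar_prod_def lessThan_atLeast0 carrier_matD)

lemma Gamma_theta: "GammaStar M A (complex_of_real \<theta>) = mat M M (\<lambda>(i,j). complex_of_real (p i j))"
proof (rule eq_matI)
  fix i j assume "i < dim_row (mat M M (\<lambda>(i,j). complex_of_real (p i j)))"
    "j < dim_col (mat M M (\<lambda>(i,j). complex_of_real (p i j)))"
  hence ij: "i < M" "j < M" by auto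
  have "complex_of_real (\<Sum>k. \<theta> ^ k * a k i j) = (\<Sum>k. complex_of_real (\<theta> ^ k * a k i j))"
    by (rule suminf_of_real[OF summable_theta_series[OF ij]])
  hence "(\<Sum>k. complex_of_real \<theta> ^ k * complex_of_real (a k i j)) = complex_of_real (\<Sum>k. \<theta> ^ k * a k i j)"
    by simp
  thus "GammaStar M A (complex_of_real \<theta>) $$ (i, j) = mat M M (\<lambda>(i,j). complex_of_real (p i j)) $$ (i, j)"
    unfolding Gamma_index[OF ij] p_def using ij by (simp add: divide_inverse mult.commute)
qed (auto simp: GammaStar_def Astar_def)

lemma eigenvalue_Gamma_theta_iff:
  "eigenvalue (GammaStar M A (complex_of_real \<theta>)) l \<longleftrightarrow>
   eigenvalue (Astar M A (complex_of_real \<theta>)) (l * complex_of_real \<theta>)"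
  unfolding GammaStar_def using theta_gt1
  by (subst eigenvalue_smult_iff[where n = M]) (auto simp: Astar_def divide_inverse)

sublocale pf: unit_perron_frobenius M p
proof
  have delta: "eigenvalue (Astar M A (complex_of_real \<theta>)) (complex_of_real \<theta>)"
    "\<And>m. eigenvalue (Astar M A (complex_of_real \<theta>)) m \<Longrightarrow> cmod m \<le> \<theta>"
    using delta_spec[of "Astar M A (complex_of_real \<theta>)" M] M_pos theta_gt1
    unfolding theta_delta[symmetric] by (auto simp: Astar_def)
  show "eigenvalue (mat M M (\<lambda>(i,j). complex_of_real (p i j))) 1"
    using delta(1) eigenvalue_Gamma_theta_iff[of 1] unfolding Gamma_theta by simp
  fix l assume "eigenvalue (mat M M (\<lambda>(i,j). complex_of_real (p i j))) l"
  hence "cmod (l * complex_of_real \<theta>) \<le> \<theta>"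
    using delta(2) eigenvalue_Gamma_theta_iff[of l] unfolding Gamma_theta by simp
  thus "cmod l \<le> 1" using theta_gt1 by (simp add: norm_mult)
qed (use M_pos p_nonneg irreducible_p in auto)

lemma norm_Gamma_index_le:
  assumes w: "cmod w = 1" and ij: "i < M" "j < M"
  shows "cmod (Gam w $$ (i, j)) \<le> p i j"
proof -
  let ?f = "\<lambda>k. (complex_of_real \<theta> * w) ^ k * complex_of_real (a k i j)"
  have nf: "norm (?f k) = \<theta> ^ k * a k i j" for k
    using w theta_gt1 A_nonneg ij by (simp add: norm_mult norm_power)
  have "cmod (Gam w $$ (i, j)) = cmod (suminf ?f) / \<theta>"
    unfolding Gamma_index[OF ij] using w theta_gt1 by (simp add: norm_mult norm_inverse divide_inverse)
  also have "\<dots> \<le> (\<Sum>k. \<theta> ^ k * a k i j) / \<theta>"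
    using summable_norm[of ?f] summable_Gamma_series[OF ij w] summable_theta_series[OF ij] theta_gt1
    unfolding nf
    by (intro divide_right_mono) auto
  finally show ?thesis unfolding p_def .
qed

lemma norm_Gamma_eigenvector_le:
  assumes w: "cmod w = 1" and v: "v \<in> carrier_vec M" "Gam w *\<^sub>v v = l \<cdot>\<^sub>v v" and i: "i < M"
  shows "cmod l * cmod (v $ i) \<le> pf.Pf (\<lambda>j. cmod (v $ j)) i"
proof -
  have "cmod l * cmod (v $ i) = cmod (\<Sum>j<M. Gam w $$ (i, j) * v $ j)"
    using arg_cong[OF v(2), of "\<lambda>x. x $ i"] Gamma_mult_vec_index[OF v(1) i] v(1) i
    by (simp add: norm_mult)
  also have "\<dots> \<le> (\<Sum>j<M. cmod (Gam w $$ (i, j)) * cmod (v $ j))"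
    by (rule order_trans[OF norm_sum]) (simp add: norm_mult)
  also have "\<dots> \<le> pf.Pf (\<lambda>j. cmod (v $ j)) i"
    unfolding pf.Pf_def using norm_Gamma_index_le[OF w i] by (intro sum_mono mult_right_mono) auto
  finally show ?thesis .
qed

lemma eigenvalue_Gamma_le_1:
  assumes w: "cmod w = 1" and ev: "eigenvalue (Gam w) l"
  shows "cmod l \<le> 1"
proof (rule ccontr)
  assume l: "\<not> cmod l \<le> 1"
  obtain v where v: "v \<in> carrier_vec M" "v \<noteq> 0\<^sub>v M" "Gam w *\<^sub>v v = l \<cdot>\<^sub>v v"
    using ev Gamma_carrier unfolding eigenvalue_def eigenvector_def by (metis carrier_matD(1))
  obtain j0 where j0: "j0 < M" "v $ j0 \<noteq> 0" using v(1,2) by (metis eq_vecI carrier_vecD index_zero_vec)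
  have "cmod (v $ j0) = 0"
    by (rule pf.no_geometric_growth[of "\<lambda>j. cmod (v $ j)" j0 "cmod l"])
       (use j0 l norm_Gamma_eigenvector_le[OF w v(1,3)] in auto)
  thus False using j0 by simp
qed

lemma delta_Gamma_eq_1_iff:
  assumes "cmod w = 1"
  shows "delta (Gam w) = 1 \<longleftrightarrow> eigenvalue (Gam w) 1"
  using delta_spec[OF Gamma_carrier M_pos] delta_eq_1I eigenvalue_Gamma_le_1[OF assms] by metis

lemma Gamma_fixed_vector_abs:
  fixes v :: "complex vec"
  assumes w: "cmod w = 1" and v: "v \<in> carrier_vec M" "v \<noteq> 0\<^sub>v M" "Gam w *\<^sub>v v = v" and i: "i < M"
  shows "pf.Pf (\<lambda>j. cmod (v $ j)) i = cmod (v $ i)" and "0 < cmod (v $ i)"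
proof -
  obtain j0 where j0: "j0 < M" "v $ j0 \<noteq> 0" using v(1,2) by (metis eq_vecI carrier_vecD index_zero_vec)
  define y where "y j = cmod (v $ j)" for j
  have y0: "\<And>j. j < M \<Longrightarrow> 0 \<le> y j" and yj0: "0 < y j0" unfolding y_def using j0 by auto
  have "y i \<le> pf.Pf y i" if "i < M" for i
    using norm_Gamma_eigenvector_le[OF w v(1), of 1] v(3) that unfolding y_def by simp
  hence fixed: "\<And>i. i < M \<Longrightarrow> pf.Pf y i = y i"
    using pf.Pf_eq_of_le[of y j0, OF y0 j0(1) yj0] by blast
  thus "pf.Pf (\<lambda>j. cmod (v $ j)) i = cmod (v $ i)" using i unfolding y_def by simp
  show "0 < cmod (v $ i)"
    using pf.pos_of_superharmonic[of y j0, OF y0 _ j0(1) _ i] fixed yj0 unfolding y_def by simp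
qed

text \<open>Equality in the triangle inequality behind \<open>|Gam w| \<le> P\<close>: every term of
  \<open>(Gam w v)\<^sub>i\<close> has the same argument as \<open>v\<^sub>i\<close>.\<close>

lemma Gamma_fixed_vector_sgn:
  fixes v :: "complex vec"
  assumes w: "cmod w = 1" and v: "v \<in> carrier_vec M" "v \<noteq> 0\<^sub>v M" "Gam w *\<^sub>v v = v"
    and ij: "i < M" "j < M" and ak: "0 < a k i j"
  shows "sgn (v $ i) = w ^ k * inverse w * sgn (v $ j)"
proof -
  define y where "y j = cmod (v $ j)" for j
  have y_fixed: "pf.Pf y i = y i" and y_pos: "\<And>j. j < M \<Longrightarrow> 0 < y j"
    using Gamma_fixed_vector_abs[OF w v] ij(1) unfolding y_def by blast+
  define u where "u j = sgn (v $ j)" for j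
  have u1: "cmod (u j) = 1" if "j < M" for j
    using y_pos[OF that] unfolding u_def y_def by (simp add: norm_sgn)
  have vu: "v $ j = complex_of_real (y j) * u j" if "j < M" for j
    using y_pos[OF that] unfolding u_def y_def
    by (simp add: sgn_div_norm scaleR_conv_of_real mult.assoc[symmetric] of_real_mult[symmetric])
  define g where "g = (\<lambda>j k. y j / \<theta> * (\<theta> ^ k * a k i j))"
  define z where "z = (\<lambda>j k. cnj (u i) * (w ^ k * inverse w * u j))"
  have cu: "cnj (u i) * u i = 1"
    using u1[OF ij(1)] complex_norm_square[of "u i"] by (simp add: mult.commute)
  have g_sum: "(\<Sum>k. g j k) = p i j * y j" if "j < M" for j
    unfolding g_def p_def using suminf_mult[OF summable_theta_series[OF ij(1) that], of "y j / \<theta>"]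
    by simp
  have gz_sum: "(\<Sum>k. complex_of_real (g j k) * z j k) = cnj (u i) * (Gam w $$ (i, j) * v $ j)"
    if "j < M" for j
  proof -
    let ?f = "\<lambda>k. (complex_of_real \<theta> * w) ^ k * complex_of_real (a k i j)"
    let ?c = "cnj (u i) * inverse (complex_of_real \<theta> * w) * v $ j"
    have "cnj (u i) * (Gam w $$ (i, j) * v $ j) = ?c * suminf ?f"
      unfolding Gamma_index[OF ij(1) that] by (simp add: algebra_simps)
    also have "\<dots> = (\<Sum>k. ?c * ?f k)"
      by (rule suminf_mult[symmetric]) (rule summable_Gamma_series[OF ij(1) that w])
    also have "\<dots> = (\<Sum>k. complex_of_real (g j k) * z j k)"
      unfolding g_def z_def vu[OF that]
      by (simp add: inverse_mult_distrib power_mult_distrib divide_inverse mult_ac)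
    finally show ?thesis ..
  qed
  have "(\<Sum>j<M. \<Sum>k. complex_of_real (g j k) * z j k) = cnj (u i) * v $ i"
    using gz_sum Gamma_mult_vec_index[OF v(1) ij(1)] arg_cong[OF v(3), of "\<lambda>x. x $ i"] v(1) ij(1)
    by (simp add: sum_distrib_left[symmetric])
  also have "\<dots> = complex_of_real (\<Sum>j<M. \<Sum>k. g j k)"
    using vu[OF ij(1)] cu y_fixed g_sum unfolding pf.Pf_def by (simp add: mult_ac)
  finally have eq: "(\<Sum>j<M. \<Sum>k. complex_of_real (g j k) * z j k) = complex_of_real (\<Sum>j<M. \<Sum>k. g j k)" .
  have "z j k = 1"
  proof (rule weighted_unimodular_sum_eq_1[OF _ _ _ _ eq])
    show "summable (g j)" if "j \<in> {..<M}" for j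
      using summable_mult[OF summable_theta_series[of i j], of "y j / \<theta>"] ij that
      unfolding g_def by simp
    show "0 \<le> g j k" if "j \<in> {..<M}" for j k
      unfolding g_def using y_pos[of j] theta_gt1 A_nonneg[of i j k] ij that by (simp add: less_imp_le)
    show "cmod (z j k) \<le> 1" if "j \<in> {..<M}" for j k
      unfolding z_def using u1[of i] u1[of j] ij that w by (simp add: norm_mult norm_power norm_inverse)
    show "0 < g j k" unfolding g_def using y_pos[OF ij(2)] theta_gt1 ak by simp
  qed (use ij in auto)
  hence "u i = (cnj (u i) * u i) * (w ^ k * inverse w * u j)" unfolding z_def by (simp add: mult_ac)
  thus ?thesis using cu unfolding u_def by simp
qed

lemma Gamma_eigenvector_phases:
  assumes w: "cmod w = 1" and ev: "eigenvalue (Gam w) 1"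
  obtains u where "\<And>i. i < M \<Longrightarrow> u i \<noteq> 0"
    and "\<And>k i j. i < M \<Longrightarrow> j < M \<Longrightarrow> 0 < a k i j \<Longrightarrow> u i = w ^ k * inverse w * u j"
proof -
  obtain v where v: "v \<in> carrier_vec M" "v \<noteq> 0\<^sub>v M" "Gam w *\<^sub>v v = v"
    using ev Gamma_carrier unfolding eigenvalue_def eigenvector_def by (metis carrier_matD(1) scalar_vec_one)
  show ?thesis
  proof (rule that)
    show "sgn (v $ i) \<noteq> 0" if "i < M" for i
      using Gamma_fixed_vector_abs(2)[OF w v that] by (simp add: sgn_eq_0_iff)
    show "sgn (v $ i) = w ^ k * inverse w * sgn (v $ j)" if "i < M" "j < M" "0 < a k i j" for k i j
      using Gamma_fixed_vector_sgn[OF w v that] .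
  qed
qed

section \<open>The period \<open>\<tau>\<close> of the additive process\<close>

abbreviation step :: "((int \<times> nat) \<times> (int \<times> nat)) set" where
  "step \<equiv> map_step M A"

definition loops :: "int set" where
  "loops = {k. k \<noteq> 0 \<and> ((0, 0), (k, 0)) \<in> step\<^sup>+}"

lemma tau_eq_Gcd_loops: "int (tau M A) = Gcd loops"
  unfolding tau_def period_at_def loops_def by simp

lemma step_shift:
  assumes "(x, y) \<in> step\<^sup>*"
  shows "((fst x + t, snd x), (fst y + t, snd y)) \<in> step\<^sup>*"
  using assms
proof (induction rule: rtrancl_induct)
  case (step y z)
  have "((fst y + t, snd y), (fst z + t, snd z)) \<in> step"
    using step(2) unfolding map_step_def by auto
  thus ?case by (rule rtrancl_into_rtrancl[OF step(3)])
qed simp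

lemma step_edge: "i < M \<Longrightarrow> j < M \<Longrightarrow> 0 < a k i j \<Longrightarrow> ((l, i), (l + int k - 1, j)) \<in> step"
  unfolding map_step_def by auto

lemma step_phase:
  fixes w :: complex and u :: "nat \<Rightarrow> complex"
  assumes w0: "w \<noteq> 0"
    and edge: "\<And>k i j. i < M \<Longrightarrow> j < M \<Longrightarrow> 0 < a k i j \<Longrightarrow> u i = w ^ k * inverse w * u j"
    and path: "(x, y) \<in> step\<^sup>*"
  shows "u (snd x) = w powi (fst y - fst x) * u (snd y)"
  using path
proof (induction rule: rtrancl_induct)
  case (step y z)
  obtain l1 j where y: "y = (l1, j)" by force
  obtain l2 m where z: "z = (l2, m)" by force
  have d: "j < M" "m < M" "-1 \<le> l2 - l1" "0 < a (nat (l2 - l1 + 1)) j m"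
    using step(2) unfolding y z map_step_def by auto
  have "w ^ K * inverse w = w powi (int K - 1)" for K
    using w0 by (simp add: power_int_diff divide_inverse)
  hence "u j = w powi (int (nat (l2 - l1 + 1)) - 1) * u m" using edge[OF d(1,2,4)] by simp
  hence "u j = w powi (l2 - l1) * u m" using d(3) by simp
  hence "u (snd x) = (w powi (l1 - fst x) * w powi (l2 - l1)) * u m"
    using step(3) unfolding y by (simp add: mult.assoc)
  also have "w powi (l1 - fst x) * w powi (l2 - l1) = w powi (l2 - fst x)"
    using power_int_add[of w "l1 - fst x" "l2 - l1"] w0 by simp
  finally show ?case unfolding z by simp
qed simp

lemma pow_tau_eq_1_of_eigenvalue:
  assumes w: "cmod w = 1" and ev: "eigenvalue (Gam w) 1"
  shows "w ^ tau M A = 1"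
proof -
  have w0: "w \<noteq> 0" using w by auto
  obtain u where u0: "\<And>i. i < M \<Longrightarrow> u i \<noteq> 0"
    and edge: "\<And>k i j. i < M \<Longrightarrow> j < M \<Longrightarrow> 0 < a k i j \<Longrightarrow> u i = w ^ k * inverse w * u j"
    using Gamma_eigenvector_phases[OF w ev] by blast
  have "w powi s = 1" if "s \<in> loops" for s
  proof -
    have "((0, 0), (s, 0)) \<in> step\<^sup>*" using that unfolding loops_def by auto
    from step_phase[OF w0 edge this] have "u 0 = w powi s * u 0" by simp
    thus ?thesis using u0[OF M_pos] by simp
  qed
  hence "w powi (Gcd loops) = 1" by (rule power_int_Gcd_eq_1[OF w0])
  thus ?thesis unfolding tau_eq_Gcd_loops[symmetric] by simp
qed

lemma reachable_phase:
  assumes i: "i < M" and j: "j < M"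
  shows "\<exists>l. ((0, i), (l, j)) \<in> step\<^sup>*"
proof -
  have "(i, j) \<in> {(u, v). u \<in> {..<M} \<and> v \<in> {..<M} \<and> 0 < Asum A u v}\<^sup>*"
    using A_irred i j unfolding irreducible_on_def by auto
  thus ?thesis
  proof (induction rule: rtrancl_induct)
    case (step j m)
    then obtain l where l: "((0, i), (l, j)) \<in> step\<^sup>*" by blast
    have jm: "j < M" "m < M" "0 < Asum A j m" using step(2) by auto
    then obtain k where "0 < a k j m" using Asum_pos_iff by blast
    hence "((l, j), (l + int k - 1, m)) \<in> step" by (rule step_edge[OF jm(1,2)])
    thus ?case using l by (meson rtrancl_into_rtrancl)
  qed auto
qed

text \<open>A level at which phase \<open>j\<close> is reachable from \<open>(0, 0)\<close>; by the definition of \<open>\<tau>\<close>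
  it is determined modulo \<open>\<tau>\<close>.\<close>

definition level :: "nat \<Rightarrow> int" where
  "level j = (SOME l. ((0, 0), (l, j)) \<in> step\<^sup>*)"

lemma level_path: "j < M \<Longrightarrow> ((0, 0), (level j, j)) \<in> step\<^sup>*"
  unfolding level_def using reachable_phase[OF M_pos] by (rule someI_ex) auto

lemma Gcd_loops_dvd: "((0, 0), (s, 0)) \<in> step\<^sup>* \<Longrightarrow> Gcd loops dvd s"
proof (cases "s = 0")
  case False
  assume "((0, 0), (s, 0)) \<in> step\<^sup>*"
  hence "((0, 0), (s, 0)) \<in> step\<^sup>+" using False by (metis Pair_inject rtranclD)
  hence "s \<in> loops" using False unfolding loops_def by auto
  thus ?thesis by (rule Gcd_dvd)
qed simp

lemma Gcd_loops_dvd_edge: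
  assumes i: "i < M" and j: "j < M" and ak: "0 < a k i j"
  shows "Gcd loops dvd (int k - 1 - (level j - level i))"
proof -
  obtain e where e: "((0, j), (e, 0)) \<in> step\<^sup>*" using reachable_phase[OF j M_pos] by blast
  have "((0, 0), (level i + int k - 1, j)) \<in> step\<^sup>*"
    using level_path[OF i] step_edge[OF i j ak, of "level i"] by (meson rtrancl_into_rtrancl)
  moreover have "((level i + int k - 1, j), (e + (level i + int k - 1), 0)) \<in> step\<^sup>*"
    using step_shift[OF e, of "level i + int k - 1"] by simp
  ultimately have d1: "Gcd loops dvd (e + (level i + int k - 1))"
    by (meson Gcd_loops_dvd rtrancl_trans)
  have "((level j, j), (e + level j, 0)) \<in> step\<^sup>*" using step_shift[OF e, of "level j"] by simp
  hence d2: "Gcd loops dvd (e + level j)"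
    using level_path[OF j] by (meson Gcd_loops_dvd rtrancl_trans)
  have "int k - 1 - (level j - level i) = (e + (level i + int k - 1)) - (e + level j)" by simp
  thus ?thesis using d1 d2 by (metis dvd_diff)
qed

lemma Gamma_index_of_pow_tau:
  assumes w: "cmod w = 1" and wt: "w ^ tau M A = 1" and ij: "i < M" "j < M"
  shows "Gam w $$ (i, j) = w powi (level j - level i) * complex_of_real (p i j)"
proof -
  have w0: "w \<noteq> 0" using w by auto
  have wG: "w powi (Gcd loops) = 1" using wt unfolding tau_eq_Gcd_loops[symmetric] by simp
  let ?c = "w * w powi (level j - level i)"
  have "w ^ k = ?c" if ak: "0 < a k i j" for k
  proof -
    obtain q where "int k - 1 - (level j - level i) = Gcd loops * q"
      using Gcd_loops_dvd_edge[OF ij ak] by (auto elim: dvdE)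
    hence q: "int k - 1 = (level j - level i) + Gcd loops * q" by simp
    have "w ^ k = w * w powi (int k - 1)" using w0 by (simp add: power_int_diff)
    also have "w powi (int k - 1) = w powi (level j - level i) * (w powi Gcd loops) powi q"
      unfolding q using w0 by (simp add: power_int_add power_int_mult)
    finally show ?thesis using wG by simp
  qed
  hence "(complex_of_real \<theta> * w) ^ k * complex_of_real (a k i j) = ?c * complex_of_real (\<theta> ^ k * a k i j)" for k
    using A_nonneg[OF ij, of k] by (cases "0 < a k i j") (auto simp: power_mult_distrib mult_ac)
  hence "(\<Sum>k. (complex_of_real \<theta> * w) ^ k * complex_of_real (a k i j))
      = (\<Sum>k. ?c * complex_of_real (\<theta> ^ k * a k i j))" by (simp only:)
  also have "\<dots> = ?c * (\<Sum>k. complex_of_real (\<theta> ^ k * a k i j))"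
    by (rule suminf_mult[OF summable_of_real[OF summable_theta_series[OF ij]]])
  also have "(\<Sum>k. complex_of_real (\<theta> ^ k * a k i j)) = complex_of_real (\<Sum>k. \<theta> ^ k * a k i j)"
    by (rule suminf_of_real[OF summable_theta_series[OF ij], symmetric])
  finally show ?thesis unfolding Gamma_index[OF ij] p_def using w0 theta_gt1 by (simp add: field_simps)
qed

text \<open>If \<open>w\<^sup>\<tau> = 1\<close>, conjugating the matrix of \<open>p\<close> with the diagonal matrix of the
  phases \<open>w ^ level j\<close> gives \<open>Gam w\<close>.\<close>

lemma similar_Gamma_of_pow_tau:
  assumes w: "cmod w = 1" and wt: "w ^ tau M A = 1"
  shows "similar_mat (Gam w) (mat M M (\<lambda>(i,j). complex_of_real (p i j)))"
proof -
  let ?P = "mat M M (\<lambda>(i,j). complex_of_real (p i j))"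
  have w0: "w \<noteq> 0" using w by auto
  define D where "D s = mat M M (\<lambda>(i,j). if i = j then w powi (s * level i) else 0)" for s :: int
  have D: "D s \<in> carrier_mat M M" and D_dim [simp]: "dim_row (D s) = M" "dim_col (D s) = M" for s
    unfolding D_def by auto
  have D_inv: "D s * D (- s) = 1\<^sub>m M" for s
  proof (rule eq_matI)
    fix i j assume "i < dim_row (1\<^sub>m M :: complex mat)" "j < dim_col (1\<^sub>m M :: complex mat)"
    hence ij: "i < M" "j < M" by auto
    have "(D s * D (- s)) $$ (i, j) = w powi (s * level i) * D (- s) $$ (i, j)"
      unfolding D_def[of s] by (rule diag_mult_mat_index(1)[OF D ij])
    thus "(D s * D (- s)) $$ (i, j) = 1\<^sub>m M $$ (i, j)"
      using ij w0 unfolding D_def by (simp add: power_int_minus)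
  qed (use D in auto)
  have "Gam w = D (-1) * ?P * D 1"
  proof (rule eq_matI)
    fix i j assume "i < dim_row (D (-1) * ?P * D 1)" "j < dim_col (D (-1) * ?P * D 1)"
    hence ij: "i < M" "j < M" by simp_all
    have DP: "D (-1) * ?P \<in> carrier_mat M M" using D[of "-1"] by (simp add: mult_carrier_mat)
    have "(D (-1) * ?P * D 1) $$ (i, j) = (D (-1) * ?P) $$ (i, j) * w powi (1 * level j)"
      unfolding D_def[of 1] by (rule diag_mult_mat_index(2)[OF DP ij])
    also have "(D (-1) * ?P) $$ (i, j) = w powi (-1 * level i) * ?P $$ (i, j)"
      unfolding D_def[of "-1"] by (rule diag_mult_mat_index(1)[OF _ ij]) simp
    also have "w powi (-1 * level i) * ?P $$ (i, j) * w powi (1 * level j)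
        = w powi (level j - level i) * complex_of_real (p i j)"
      using w0 ij by (simp add: power_int_diff power_int_minus field_simps)
    finally show "Gam w $$ (i, j) = (D (-1) * ?P * D 1) $$ (i, j)"
      using Gamma_index_of_pow_tau[OF w wt ij] by simp
  qed (use D Gamma_carrier in auto)
  thus ?thesis
    by (intro similar_matI[of _ _ "D (-1)" "D 1" M]) (use Gamma_carrier D D_inv[of 1] D_inv[of "-1"] in auto)
qed

lemma eigenvalue_1_simple_of_pow_tau:
  assumes "cmod w = 1" and "w ^ tau M A = 1"
  shows "eigenvalue (Gam w) 1 \<and> order 1 (char_poly (Gam w)) = 1"
  using char_poly_similar[OF similar_Gamma_of_pow_tau[OF assms]] pf.order_char_poly_1 pf.eigenvalue_1
    eigenvalue_root_char_poly[OF Gamma_carrier] eigenvalue_root_char_poly[of pf.Pm M] by auto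

text \<open>If \<open>g j - g i \<le> k - 1\<close> along every transition, then level minus \<open>g\<close>(phase) never
  decreases along the additive process; this contradicts its negative drift \<open>\<rho> - 1\<close>.
  First, equality along all transitions would make the drift zero.\<close>

lemma no_exact_potential:
  assumes g: "\<And>k i j. i < M \<Longrightarrow> j < M \<Longrightarrow> 0 < a k i j \<Longrightarrow> g j - g i = int k - 1"
  shows False
proof -
  define G where "G j = real_of_int (g j)" for j
  have row: "(\<Sum>k. real k * (\<Sum>j<M. a k i j)) = (\<Sum>j<M. (G j - G i + 1) * Asum A i j)"
    if i: "i < M" for i
  proof -
    have jump: "real k * a k i j = (G j - G i + 1) * a k i j" if "j < M" for j k
      using g[OF i that, of k] A_nonneg[OF i that, of k] unfolding G_def
      by (cases "0 < a k i j") auto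
    have "(\<Sum>k. real k * (\<Sum>j<M. a k i j)) = (\<Sum>k. \<Sum>j<M. (G j - G i + 1) * a k i j)"
      unfolding sum_distrib_left by (intro arg_cong[where f = suminf] ext sum.cong refl) (simp add: jump)
    also have "\<dots> = (\<Sum>j<M. \<Sum>k. (G j - G i + 1) * a k i j)"
      by (rule suminf_sum) (use i A_summable in \<open>auto intro: summable_mult\<close>)
    also have "\<dots> = (\<Sum>j<M. (G j - G i + 1) * Asum A i j)"
      unfolding Asum_def by (intro sum.cong refl suminf_mult) (use i A_summable in auto)
    finally show ?thesis .
  qed
  have "(\<Sum>i<M. pi i * (\<Sum>j<M. (G j - G i + 1) * Asum A i j))
      = (\<Sum>i<M. \<Sum>j<M. pi i * Asum A i j * G j) - (\<Sum>i<M. pi i * G i * (\<Sum>j<M. Asum A i j))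
        + (\<Sum>i<M. pi i * (\<Sum>j<M. Asum A i j))"
    by (simp add: algebra_simps sum_distrib_left sum.distrib sum_subtractf)
  also have "\<dots> = (\<Sum>j<M. pi j * G j) - (\<Sum>i<M. pi i * G i) + 1"
    using pi_stat A_stoch pi_norm
    by (simp add: sum.swap[of _ "{..<M}" "{..<M}"] sum_distrib_right[symmetric])
  finally show False using rho_lt1 row by simp
qed

definition tilt :: "(nat \<Rightarrow> int) \<Rightarrow> nat \<Rightarrow> nat \<Rightarrow> nat \<Rightarrow> real" where
  "tilt g i j k = \<theta> powi (int k - 1 - (g j - g i))"

lemma tilt_eq: "tilt g i j k = \<theta> powi g i / \<theta> powi g j / \<theta> * \<theta> ^ k"
proof -
  have th0: "\<theta> \<noteq> 0" using theta_gt1 by simp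
  have "tilt g i j k = \<theta> powi ((g i - g j - 1) + int k)"
    unfolding tilt_def by (rule arg_cong[where f = "power_int \<theta>"]) simp
  also have "\<dots> = \<theta> powi (g i - g j - 1) * \<theta> ^ k"
    unfolding power_int_add[OF disjI1[OF th0]] power_int_of_nat ..
  also have "\<theta> powi (g i - g j - 1) = \<theta> powi g i / \<theta> powi g j / \<theta>"
    using th0 by (simp add: power_int_diff)
  finally show ?thesis .
qed

lemma tilt_series:
  assumes "i < M" "j < M"
  shows "summable (\<lambda>k. tilt g i j k * a k i j)"
    and "(\<Sum>k. tilt g i j k * a k i j) = \<theta> powi g i * p i j / \<theta> powi g j"
proof -
  have eq: "tilt g i j k * a k i j = \<theta> powi g i / \<theta> powi g j / \<theta> * (\<theta> ^ k * a k i j)" for k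
    unfolding tilt_eq by simp
  show "summable (\<lambda>k. tilt g i j k * a k i j)"
    unfolding eq by (rule summable_mult[OF summable_theta_series[OF assms]])
  show "(\<Sum>k. tilt g i j k * a k i j) = \<theta> powi g i * p i j / \<theta> powi g j"
    unfolding eq suminf_mult[OF summable_theta_series[OF assms]] p_def by simp
qed

text \<open>The tilted matrix is \<open>D P D\<inverse>\<close> with \<open>D = diag(\<theta>\<^sup>g)\<close>, so it fixes \<open>D\<close> times the Perron
  vector.\<close>

lemma tilt_harmonic:
  assumes i: "i < M"
  shows "(\<Sum>j<M. (\<Sum>k. tilt g i j k * a k i j) * (\<theta> powi g j * pf.perron j)) = \<theta> powi g i * pf.perron i"
proof -
  have "(\<Sum>j<M. (\<Sum>k. tilt g i j k * a k i j) * (\<theta> powi g j * pf.perron j))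
      = (\<Sum>j<M. \<theta> powi g i * (p i j * pf.perron j))"
    using tilt_series(2)[OF i] theta_gt1 by (intro sum.cong refl) simp
  also have "\<dots> = \<theta> powi g i * pf.perron i"
    using pf.Pf_perron[OF i] unfolding pf.Pf_def sum_distrib_left[symmetric] by simp
  finally show ?thesis .
qed

lemma potential_exact:
  assumes g: "\<And>k i j. i < M \<Longrightarrow> j < M \<Longrightarrow> 0 < a k i j \<Longrightarrow> g j - g i \<le> int k - 1"
    and ij: "i < M" "j < M" and ak: "0 < a k i j"
  shows "g j - g i = int k - 1"
proof -
  define z where "z j = \<theta> powi g j * pf.perron j" for j
  define t where "t i j = (\<Sum>k. tilt g i j k * a k i j)" for i j
  have z_pos: "0 < z j" if "j < M" for j
    unfolding z_def using theta_gt1 pf.perron_pos[OF that] by simp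
  have ta_ge: "a k i j \<le> tilt g i j k * a k i j" if "i < M" "j < M" for i j k
    using g[OF that, of k] A_nonneg[OF that, of k] theta_gt1 unfolding tilt_def
    by (cases "0 < a k i j") (auto intro!: mult_le_cancel_right1[THEN iffD2])
  have Asum_le: "Asum A i j \<le> t i j" if "i < M" "j < M" for i j
    unfolding Asum_def t_def using ta_ge[OF that] A_summable[OF that] tilt_series(1)[OF that]
    by (rule suminf_le)
  have z_superharmonic: "(\<Sum>j<M. Asum A i j * z j) \<le> z i" if "i < M" for i
  proof -
    have "(\<Sum>j<M. Asum A i j * z j) \<le> (\<Sum>j<M. t i j * z j)"
      using Asum_le[OF that] z_pos by (intro sum_mono mult_right_mono) (auto intro: less_imp_le)
    thus ?thesis using tilt_harmonic[OF that] unfolding t_def z_def by simp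
  qed
  have "(\<Sum>j<M. Asum A i j * z j) = z i"
    using irreducible_stochastic_superharmonic_harmonic[OF A_irred Asum_nonneg A_stoch z_superharmonic ij(1)] .
  hence "(\<Sum>j<M. (t i j - Asum A i j) * z j) = 0"
    using tilt_harmonic[OF ij(1)] unfolding t_def z_def by (simp add: algebra_simps sum_subtractf)
  moreover have nonneg: "0 \<le> (t i j - Asum A i j) * z j" if "j \<in> {..<M}" for j
    using Asum_le[OF ij(1), of j] z_pos[of j] that by simp
  ultimately have "(t i j - Asum A i j) * z j = 0"
    using sum_nonneg_eq_0_iff[OF finite_lessThan nonneg] ij(2) by simp
  hence "(\<Sum>k. tilt g i j k * a k i j - a k i j) = 0"
    using z_pos[OF ij(2)] suminf_diff[OF tilt_series(1)[OF ij] A_summable[OF ij]]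
    unfolding t_def Asum_def by simp
  hence "tilt g i j k * a k i j - a k i j = 0"
    using suminf_eq_zero_iff[OF summable_diff[OF tilt_series(1)[OF ij] A_summable[OF ij]]] ta_ge[OF ij]
    by simp
  hence "\<not> 0 < int k - 1 - (g j - g i)"
    using one_less_power_int[OF theta_gt1] ak unfolding tilt_def by fastforce
  thus ?thesis using g[OF ij ak] by simp
qed

lemma no_potential:
  assumes "\<And>k i j. i < M \<Longrightarrow> j < M \<Longrightarrow> 0 < a k i j \<Longrightarrow> g j - g i \<le> int k - 1"
  shows False
proof (rule no_exact_potential)
  fix k i j assume "i < M" "j < M" "0 < a k i j"
  with assms show "g j - g i = int k - 1" by (rule potential_exact)
qed

lemma tau_pos: "0 < tau M A"
proof (rule ccontr)
  assume "\<not> 0 < tau M A"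
  hence "Gcd loops = 0" using tau_eq_Gcd_loops by simp
  hence "level j - level i = int k - 1" if "i < M" "j < M" "0 < a k i j" for k i j
    using Gcd_loops_dvd_edge[OF that, unfolded \<open>Gcd loops = 0\<close>] by simp
  thus False using no_exact_potential by blast
qed

text \<open>If \<open>\<tau> > M\<close>, some residue \<open>r\<close> mod \<open>\<tau>\<close> is missed by all levels, and
  \<open>(level - r - 1) mod \<tau>\<close> takes values in \<open>[0, \<tau> - 2]\<close>, which makes it a potential.\<close>

lemma tau_le: "tau M A \<le> M"
proof (rule ccontr)
  assume "\<not> tau M A \<le> M"
  define G where "G = Gcd loops"
  have G: "G = int (tau M A)" unfolding G_def tau_eq_Gcd_loops ..
  have "card ((\<lambda>j. level j mod G) ` {..<M}) < card {0..<G}"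
    using card_image_le[of "{..<M}" "\<lambda>j. level j mod G"] \<open>\<not> tau M A \<le> M\<close> G by simp
  then obtain r where r: "r \<in> {0..<G}" "r \<notin> (\<lambda>j. level j mod G) ` {..<M}"
    by (meson card_mono finite_imageI finite_lessThan not_le subsetI)
  define g where "g j = (level j - r - 1) mod G" for j
  have g_bounds: "0 \<le> g j" "g j \<le> G - 2" if "j < M" for j
  proof -
    have "g j \<noteq> G - 1"
    proof
      assume "g j = G - 1"
      have "level j mod G = ((level j - r - 1) mod G + (r + 1)) mod G" by (simp add: mod_add_left_eq)
      also have "\<dots> = (G - 1 + (r + 1)) mod G" using \<open>g j = G - 1\<close> unfolding g_def by (simp only:)
      also have "\<dots> = r" using r(1) by simp
      finally show False using r(2) that by auto
    qed
    moreover have "0 \<le> g j" "g j < G" unfolding g_def using r(1) by auto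
    ultimately show "0 \<le> g j" "g j \<le> G - 2" by auto
  qed
  have "g j - g i \<le> int k - 1" if ij: "i < M" "j < M" and ak: "0 < a k i j" for k i j
  proof (rule dvd_diff_le_of_ge_minus_1[of G])
    have d1: "G dvd (int k - 1 - (level j - level i))" using Gcd_loops_dvd_edge[OF ij ak] unfolding G_def .
    have d2: "G dvd (level j - r - 1) - g j" "G dvd (level i - r - 1) - g i"
      unfolding g_def by (simp_all add: minus_mod_eq_mult_div)
    have "(int k - 1 - (level j - level i)) + ((level j - r - 1) - g j) - ((level i - r - 1) - g i)
        = int k - 1 - (g j - g i)" by simp
    thus "G dvd int k - 1 - (g j - g i)" using dvd_diff[OF dvd_add[OF d1 d2(1)] d2(2)] by metis
    show "g j - g i \<le> G - 2" using g_bounds[OF ij(1)] g_bounds[OF ij(2)] by simp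
  qed simp
  thus False by (rule no_potential)
qed

end

lemma omega_pow_eq_1_iff: "0 < n \<Longrightarrow> omega n ^ t = 1 \<longleftrightarrow> n dvd t"
  unfolding omega_def by (rule cis_2pi_div_pow_eq_1_iff)

theorem proposition2p11:
  fixes M0 M :: nat
    and A B :: "nat \<Rightarrow> real mat" and C0 :: "real mat"
    and pi :: "nat \<Rightarrow> real" and \<theta> :: real
  assumes M0_pos: "M0 > 0" and M_pos: "M > 0"
    and A_dim: "\<And>k. A k \<in> carrier_mat M M"
    and B0_dim: "B 0 \<in> carrier_mat M0 M0"
    and B_dim: "\<And>k. k \<ge> 1 \<Longrightarrow> B k \<in> carrier_mat M0 M"
    and C0_dim: "C0 \<in> carrier_mat M M0"
    and A_nonneg: "\<And>k i j. i < M \<Longrightarrow> j < M \<Longrightarrow> A k $$ (i, j) \<ge> 0"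
    and B0_nonneg: "\<And>i j. i < M0 \<Longrightarrow> j < M0 \<Longrightarrow> B 0 $$ (i, j) \<ge> 0"
    and B_nonneg: "\<And>k i j. k \<ge> 1 \<Longrightarrow> i < M0 \<Longrightarrow> j < M \<Longrightarrow> B k $$ (i, j) \<ge> 0"
    and C0_nonneg: "\<And>i j. i < M \<Longrightarrow> j < M0 \<Longrightarrow> C0 $$ (i, j) \<ge> 0"
    and A_summable: "\<And>i j. i < M \<Longrightarrow> j < M \<Longrightarrow> summable (\<lambda>k. A k $$ (i, j))"
    and A_stoch: "\<And>i. i < M \<Longrightarrow> (\<Sum>j<M. Asum A i j) = 1"
    and B_summable: "\<And>i. i < M0 \<Longrightarrow> summable (\<lambda>k. \<Sum>j<M. B (Suc k) $$ (i, j))"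
    and B_stoch: "\<And>i. i < M0 \<Longrightarrow>
        (\<Sum>j<M0. B 0 $$ (i, j)) + (\<Sum>k. \<Sum>j<M. B (Suc k) $$ (i, j)) = 1"
    and T_stoch: "\<And>i. i < M \<Longrightarrow>
        (\<Sum>j<M0. C0 $$ (i, j)) + (\<Sum>k. \<Sum>j<M. A (Suc k) $$ (i, j)) = 1"
    and pi_stat: "\<And>j. j < M \<Longrightarrow> (\<Sum>i<M. pi i * Asum A i j) = pi j"
    and pi_norm: "(\<Sum>i<M. pi i) = 1"
    and T_irred: "irreducible_on (mg1_states M0 M) (mg1_T A B C0)"
    and A_irred: "irreducible_on {..<M} (Asum A)"
    and rho_lt1: "(\<Sum>i<M. pi i * (\<Sum>k. real k * (\<Sum>j<M. A k $$ (i, j)))) < 1"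
    and rA_gt1: "rA M A > 1"
    and theta_gt1: "1 < \<theta>" and theta_lt: "ereal \<theta> < rA M A"
    and theta_delta: "complex_of_real \<theta> = delta (Astar M A (complex_of_real \<theta>))"
  shows "(\<forall>w::complex. cmod w = 1 \<longrightarrow>
            (delta (GammaStar M A (complex_of_real \<theta> * w)) = 1 \<longleftrightarrow> w ^ tau M A = 1))
       \<and> tau M A = Max {n \<in> {1..M}. delta (GammaStar M A (complex_of_real \<theta> * omega n)) = 1}
       \<and> (\<forall>w::complex. cmod w = 1 \<longrightarrow>
            delta (GammaStar M A (complex_of_real \<theta> * w)) = 1 \<longrightarrow>
            order 1 (char_poly (GammaStar M A (complex_of_real \<theta> * w))) = 1)"
proof -
  interpret mg1_theta M A \<theta> pi
    by unfold_locales (fact M_pos A_nonneg A_summable A_stoch pi_stat pi_norm A_irred rho_lt1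
        theta_gt1 theta_lt theta_delta)+
  have delta_iff: "delta (Gam w) = 1 \<longleftrightarrow> w ^ tau M A = 1" if "cmod w = 1" for w
    using delta_Gamma_eq_1_iff[OF that] pow_tau_eq_1_of_eigenvalue[OF that]
      eigenvalue_1_simple_of_pow_tau[OF that] by blast
  have "{n \<in> {1..M}. delta (Gam (omega n)) = 1} = {n \<in> {1..M}. n dvd tau M A}"
    using delta_iff[of "omega n" for n] omega_pow_eq_1_iff by (auto simp: omega_def)
  moreover have "Max {n \<in> {1..M}. n dvd tau M A} = tau M A"
    using tau_pos tau_le by (intro Max_eqI) (auto intro: dvd_imp_le)
  ultimately show ?thesis
    using delta_iff eigenvalue_1_simple_of_pow_tau by auto
qed

end
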